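(* In $\mathfrak{h}^0_t[[u,v]]$ one has $$\Delta_v^t\left(\frac{1}{1-xu-xv+x[(1-t)x+y]uv}\,\frac{x}{1-txv}\,y\right)=\frac{x}{1-xu}\,\frac{y}{1-yv}.$$
   Context: $t,u,v$ are variables commuting with each other and with $x,y$. $\mathfrak{h}_t=\mathbb{Q}[t]\langle x,y\rangle$, $\mathfrak{h}^0_t=\mathbb{Q}[t]+x\mathfrak{h}_ty$; $1/(1-X)$ denotes the (concatenation) geometric series $\sum_{n\ge0}X^n$ in the completed noncommutative power series ring. $\sigma_t$ is the algebra automorphism of $\mathfrak{h}_t$ with $\sigma_t(x)=x,\sigma_t(y)=tx+y$; $S_t$ is the $\mathbb{Q}[t]$-linear map with $S_t(1)=1$, $S_t(wa)=\sigma_t(w)a$ for words $w$, letters $a$; $S_{-t}$ is the same with $-t$ (the inverse of $S_t$). For $n\ge1$, $\partial_n$ is the $\mathbb{Q}[t]$-linear derivation of $\mathfrak{h}_t$ with $\partial_n(x)=x(x+y)^{n-1}y$, $\partial_n(y)=-x(x+y)^{n-1}y$, and $\partial_n^t=S_{-t}\circ\partial_n\circ S_t$. Define $\Delta_v^t=\exp\big(\sum_{n\ge1}\frac{\partial_n^t}{n}v^n\big)$, acting coefficientwise on power series in $u,v$. *)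

theory Defs
  imports "HOL-Computational_Algebra.Polynomial"
begin

datatype letter = X | Y

type_synonym word = "letter list"
(* an element of h_t (or of its completion): coefficient of each word, in Q[t] *)
type_synonym ncp = "word \<Rightarrow> rat poly"
(* a power series in the commuting variables u, v with coefficients in h_t:
   S i j is the coefficient of u^i v^j *)
type_synonym ser = "nat \<Rightarrow> nat \<Rightarrow> ncp"

definition tvar :: "rat poly" where "tvar = [:0, 1:]"

definition nczero :: ncp where "nczero = (\<lambda>w. 0)"
definition ncmon :: "word \<Rightarrow> ncp" where "ncmon w = (\<lambda>v. if v = w then 1 else 0)"
definition ncone :: ncp where "ncone = ncmon []"
definition ncx :: ncp where "ncx = ncmon [X]"
definition ncy :: ncp where "ncy = ncmon [Y]"
definition ncadd :: "ncp \<Rightarrow> ncp \<Rightarrow> ncp" where "ncadd f g = (\<lambda>w. f w + g w)"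
definition ncsub :: "ncp \<Rightarrow> ncp \<Rightarrow> ncp" where "ncsub f g = (\<lambda>w. f w - g w)"
definition ncneg :: "ncp \<Rightarrow> ncp" where "ncneg f = (\<lambda>w. - f w)"
definition ncsmult :: "rat poly \<Rightarrow> ncp \<Rightarrow> ncp" where "ncsmult c f = (\<lambda>w. c * f w)"

definition ncmult :: "ncp \<Rightarrow> ncp \<Rightarrow> ncp" where
  "ncmult f g = (\<lambda>w. \<Sum>k\<le>length w. f (take k w) * g (drop k w))"

fun ncpow :: "ncp \<Rightarrow> nat \<Rightarrow> ncp" where
  "ncpow f 0 = ncone"
| "ncpow f (Suc n) = ncmult f (ncpow f n)"

(* All maps used here
   (sigma_t, S_t, partial_n) send a word to a combination of words that are
   at least as long, so only words v with length v <= length w contribute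
   to the coefficient of w; the sum is therefore finite and exact. *)
definition nclin :: "(word \<Rightarrow> ncp) \<Rightarrow> ncp \<Rightarrow> ncp" where
  "nclin F f = (\<lambda>w. \<Sum>v\<in>{v. length v \<le> length w}. f v * F v w)"

section \<open>sigma_t and S_t (parametrised by c = t or c = -t)\<close>

fun sigma_letter :: "rat poly \<Rightarrow> letter \<Rightarrow> ncp" where
  "sigma_letter c X = ncx"
| "sigma_letter c Y = ncadd (ncsmult c ncx) ncy"

fun sigma_word :: "rat poly \<Rightarrow> word \<Rightarrow> ncp" where
  "sigma_word c [] = ncone"
| "sigma_word c (a # w) = ncmult (sigma_letter c a) (sigma_word c w)"

definition S_word :: "rat poly \<Rightarrow> word \<Rightarrow> ncp" where
  "S_word c w = (if w = [] then ncone
                 else ncmult (sigma_word c (butlast w)) (ncmon [last w]))"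

definition Sop :: "rat poly \<Rightarrow> ncp \<Rightarrow> ncp" where
  "Sop c = nclin (S_word c)"

definition dletter :: "nat \<Rightarrow> letter \<Rightarrow> ncp" where
  "dletter n a = (let p = ncmult ncx (ncmult (ncpow (ncadd ncx ncy) (n - 1)) ncy)
                  in (case a of X \<Rightarrow> p | Y \<Rightarrow> ncneg p))"

definition dword :: "nat \<Rightarrow> word \<Rightarrow> ncp" where
  "dword n w = (\<lambda>v. \<Sum>i<length w.
      ncmult (ncmon (take i w)) (ncmult (dletter n (w ! i)) (ncmon (drop (Suc i) w))) v)"

definition dop :: "nat \<Rightarrow> ncp \<Rightarrow> ncp" where
  "dop n = nclin (dword n)"

definition dtop :: "nat \<Rightarrow> ncp \<Rightarrow> ncp" where
  "dtop n f = Sop (- tvar) (dop n (Sop tvar f))"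

(* f * u^a * v^b *)
definition sterm :: "nat \<Rightarrow> nat \<Rightarrow> ncp \<Rightarrow> ser" where
  "sterm a b f = (\<lambda>i j. if i = a \<and> j = b then f else nczero)"

definition sadd :: "ser \<Rightarrow> ser \<Rightarrow> ser" where
  "sadd F G = (\<lambda>i j. ncadd (F i j) (G i j))"

definition ssub :: "ser \<Rightarrow> ser \<Rightarrow> ser" where
  "ssub F G = (\<lambda>i j. ncsub (F i j) (G i j))"

definition smul :: "ser \<Rightarrow> ser \<Rightarrow> ser" where
  "smul F G = (\<lambda>i j w. \<Sum>i1\<le>i. \<Sum>j1\<le>j. ncmult (F i1 j1) (G (i - i1) (j - j1)) w)"

fun spow :: "ser \<Rightarrow> nat \<Rightarrow> ser" where
  "spow F 0 = sterm 0 0 ncone"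
| "spow F (Suc n) = smul F (spow F n)"

(* 1/(1-F) = sum_n F^n, for F with vanishing constant (u^0 v^0) term;
   then F^n only contributes to u^i v^j with n <= i + j *)
definition sgeom :: "ser \<Rightarrow> ser" where
  "sgeom F = (\<lambda>i j w. \<Sum>n\<le>i + j. spow F n i j w)"

definition Dv :: "ser \<Rightarrow> ser" where
  "Dv F = (\<lambda>i j w. \<Sum>n\<in>{1..j}. smult (1 / of_nat n) (dtop n (F i (j - n)) w))"

(* exp(D); D raises the v-degree by at least 1, so D^k contributes to v^j only for k <= j *)
definition Delta :: "ser \<Rightarrow> ser" where
  "Delta F = (\<lambda>i j w. \<Sum>k\<le>j. smult (1 / fact k) ((Dv ^^ k) F i j w))"

end

theory Submission
  imports Defs "HOL-Computational_Algebra.Formal_Power_Series"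
begin

text \<open>Write \<open>z = x + y\<close>. Conjugated by \<open>S\<^sub>t\<close>, the operator \<open>\<Delta>\<^sub>v\<^sup>t\<close> becomes \<open>\<Delta>\<^sub>v = exp D\<close> with
  \<open>D = \<Sum>\<^sub>n \<partial>\<^sub>n v\<^sup>n / n\<close>, acting on \<open>h[[v]]\<close>. Since \<open>D\<close> is a derivation raising the \<open>v\<close>-order,
  \<open>\<Delta>\<^sub>v\<close> is a ring homomorphism. Both sides of the identity end in the letter \<open>y\<close>, and
  \<open>S\<^sub>t(p y) = \<sigma>\<^sub>t(p) y\<close>, so on them \<open>S\<^sub>t\<close> acts as the automorphism \<open>\<sigma>\<^sub>t\<close>, which sends
  \<open>(1 - t) x + y\<close> to \<open>z\<close>.

  As \<open>\<partial>\<^sub>n z = 0\<close>, \<open>\<Delta>\<^sub>v\<close> fixes \<open>z\<close>. Moreover \<open>\<Delta>\<^sub>v x = x (1 - v y)\<^sup>-\<^sup>1\<close>: with the Euler operator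
  \<open>E = v d/dv\<close> one has \<open>[E, D] = \<Sum>\<^sub>n \<partial>\<^sub>n v\<^sup>n\<close> and \<open>\<partial>\<^sub>n x = x z\<^sup>n\<^sup>-\<^sup>1 y\<close>, so both sides solve
  \<open>E \<Psi> = v \<Psi> (1 - v z)\<^sup>-\<^sup>1 (z - \<Psi>)\<close>, whose solution is determined by \<open>\<Psi>\<^sub>0 = x\<close>. Substituting these
  values, the claim becomes an identity between inverses of elements \<open>1 - (\<dots>)\<close> in a ring in
  which \<open>u\<close>, \<open>v\<close> and \<open>t\<close> are central.\<close>

unbundle fps_syntax

section \<open>Derivations and ring homomorphisms\<close>

locale ring_homomorphism = additive f for f :: "'a::ring_1 \<Rightarrow> 'b::ring_1" +
  assumes mult: "f (a * b) = f a * f b"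
    and one: "f 1 = 1"
begin

lemma mult_eq_1: "a * b = 1 \<Longrightarrow> f a * f b = 1"
  by (metis mult one)

end

lemma additive_of_nat_mult:
  fixes f :: "'a::ring_1 \<Rightarrow> 'b::ring_1"
  assumes "additive f"
  shows "f (of_nat k * a) = of_nat k * f a"
  by (induction k) (simp_all add: additive.add[OF assms] additive.zero[OF assms] algebra_simps)

locale derivation = additive D for D :: "'a::ring_1 \<Rightarrow> 'a" +
  assumes leibniz: "D (a * b) = D a * b + a * D b"
begin

lemma one: "D 1 = 0"
  using leibniz[of 1 1] by simp

lemma funpow_additive: "additive (D ^^ k)"
  by unfold_locales (induction k, simp_all add: add)

end

lemma derivation_additive: "derivation D \<Longrightarrow> additive D"
  by (rule derivation.axioms(1))

lemma binomial_sum_step: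
  fixes F :: "nat \<Rightarrow> nat \<Rightarrow> 'a::ring_1"
  shows "(\<Sum>k\<le>n. of_nat (n choose k) * (F (Suc k) (n - k) + F k (Suc (n - k))))
       = (\<Sum>k\<le>Suc n. of_nat (Suc n choose k) * F k (Suc n - k))"
proof -
  have shifted: "(\<Sum>k\<le>n. of_nat (n choose Suc k) * F (Suc k) (n - k))
      = (\<Sum>k\<le>n. of_nat (n choose k) * F k (Suc (n - k))) - F 0 (Suc n)"
  proof -
    have "(\<Sum>k\<le>n. of_nat (n choose k) * F k (Suc (n - k)))
        = (\<Sum>k\<le>Suc n. of_nat (n choose k) * F k (Suc n - k))"
      by (simp add: binomial_eq_0 Suc_diff_le)
    also have "\<dots> = F 0 (Suc n) + (\<Sum>k\<le>n. of_nat (n choose Suc k) * F (Suc k) (n - k))"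
      by (subst sum.atMost_Suc_shift) simp
    finally show ?thesis by (simp add: algebra_simps)
  qed
  have "(\<Sum>k\<le>Suc n. of_nat (Suc n choose k) * F k (Suc n - k))
      = F 0 (Suc n) + (\<Sum>k\<le>n. of_nat (n choose k) * F (Suc k) (n - k))
        + (\<Sum>k\<le>n. of_nat (n choose Suc k) * F (Suc k) (n - k))"
    by (subst sum.atMost_Suc_shift) (simp add: sum.distrib algebra_simps)
  also have "\<dots> = (\<Sum>k\<le>n. of_nat (n choose k) * (F (Suc k) (n - k) + F k (Suc (n - k))))"
    unfolding shifted by (simp add: sum.distrib algebra_simps)
  finally show ?thesis by simp
qed

lemma (in derivation) funpow_leibniz:
  "(D ^^ n) (a * b) = (\<Sum>k\<le>n. of_nat (n choose k) * ((D ^^ k) a * (D ^^ (n - k)) b))"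
proof (induction n)
  case (Suc n)
  have "(D ^^ Suc n) (a * b) = (\<Sum>k\<le>n. of_nat (n choose k) * D ((D ^^ k) a * (D ^^ (n - k)) b))"
    by (simp add: Suc.IH sum additive_of_nat_mult[OF additive_axioms])
  also have "\<dots> = (\<Sum>k\<le>n. of_nat (n choose k)
      * ((D ^^ Suc k) a * (D ^^ (n - k)) b + (D ^^ k) a * (D ^^ Suc (n - k)) b))"
    by (simp add: leibniz)
  also have "\<dots> = (\<Sum>k\<le>Suc n. of_nat (Suc n choose k) * ((D ^^ k) a * (D ^^ (Suc n - k)) b))"
    by (rule binomial_sum_step[where F = "\<lambda>i j. (D ^^ i) a * (D ^^ j) b"])
  finally show ?case .
qed simp

lemma commute_inverse:
  fixes a b c :: "'a::ring_1"
  assumes "a * b = b * a" "c * b = 1" "b * c = 1"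
  shows "a * c = c * a"
proof -
  have "a * c = (c * b) * a * c"
    using assms(2) by simp
  also have "\<dots> = c * (a * b) * c"
    by (simp add: assms(1) mult.assoc)
  also have "\<dots> = c * a * (b * c)"
    by (simp add: mult.assoc)
  finally show ?thesis
    using assms(3) by simp
qed

definition central :: "'a::ring_1 \<Rightarrow> bool" where
  "central c \<longleftrightarrow> (\<forall>a. c * a = a * c)"

lemma centralD: "central c \<Longrightarrow> c * a = a * c"
  by (simp add: central_def)

lemma central_commute:
  assumes "central c"
  shows "a * c = c * a" "a * (c * b) = c * (a * b)"
  using assms by (simp add: central_def, metis central_def mult.assoc)

lemma central_mult:
  assumes "central a" "central b"
  shows "central (a * b)"
  unfolding central_def
proof
  fix r
  have "a * b * r = a * (r * b)"
    by (simp add: mult.assoc centralD[OF assms(2)])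
  also have "\<dots> = (a * r) * b"
    by (simp add: mult.assoc)
  also have "\<dots> = r * (a * b)"
    by (simp only: centralD[OF assms(1)] mult.assoc)
  finally show "a * b * r = r * (a * b)" .
qed

lemma central_power: "central a \<Longrightarrow> central (a ^ n)"
proof (induction n)
  case 0
  show ?case by (simp add: central_def)
next
  case (Suc n)
  then show ?case by (simp only: power_Suc central_mult)
qed

lemma central_fps_X: "central (fps_X :: 'a::ring_1 fps)"
  unfolding central_def by (intro allI fps_mult_fps_X_commute)

lemma central_fps_const:
  assumes "central c"
  shows "central (fps_const c)"
  unfolding central_def
proof (intro allI fps_ext)
  fix a :: "'a fps" and n
  show "(fps_const c * a) $ n = (a * fps_const c) $ n"
    using centralD[OF assms, of "a $ n"] by simp
qed

lemma derivation_central_mult: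
  assumes "derivation D" "central c"
  shows "derivation (\<lambda>a. c * D a)"
proof unfold_locales
  fix a b
  show "c * D (a + b) = c * D a + c * D b"
    by (simp add: additive.add[OF derivation_additive[OF assms(1)]] distrib_left)
  have "c * D (a * b) = c * D a * b + (c * a) * D b"
    by (simp add: derivation.leibniz[OF assms(1)] distrib_left mult.assoc)
  also have "\<dots> = c * D a * b + a * (c * D b)"
    by (simp add: centralD[OF assms(2)] mult.assoc)
  finally show "c * D (a * b) = c * D a * b + a * (c * D b)" .
qed

lemma derivation_sum:
  assumes "finite A" "\<And>n. n \<in> A \<Longrightarrow> derivation (D n)"
  shows "derivation (\<lambda>a. \<Sum>n\<in>A. D n a)"
  using assms
proof (induction A rule: finite_induct)
  case empty
  show ?case by unfold_locales simp_all
next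
  case (insert m A)
  interpret Dm: derivation "D m" using insert by simp
  interpret DA: derivation "\<lambda>a. \<Sum>n\<in>A. D n a" using insert by simp
  show ?case
  proof unfold_locales
    fix a b
    show "(\<Sum>n\<in>insert m A. D n (a + b)) = (\<Sum>n\<in>insert m A. D n a) + (\<Sum>n\<in>insert m A. D n b)"
      using insert(1,2) Dm.add[of a b] DA.add[of a b] by (simp add: ac_simps)
    show "(\<Sum>n\<in>insert m A. D n (a * b)) = (\<Sum>n\<in>insert m A. D n a) * b + a * (\<Sum>n\<in>insert m A. D n b)"
      using insert(1,2) Dm.leibniz[of a b] DA.leibniz[of a b] by (simp add: distrib_left distrib_right ac_simps)
  qed
qed

section \<open>Power series\<close>

definition fps_map :: "('a::zero \<Rightarrow> 'b::zero) \<Rightarrow> 'a fps \<Rightarrow> 'b fps" where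
  "fps_map f A = Abs_fps (\<lambda>n. f (A $ n))"

lemma fps_map_nth [simp]: "fps_map f A $ n = f (A $ n)"
  by (simp add: fps_map_def)

lemma fps_map_const: "f 0 = 0 \<Longrightarrow> fps_map f (fps_const a) = fps_const (f a)"
  by (simp add: fps_eq_iff)

lemma fps_map_X: "f 0 = 0 \<Longrightarrow> f 1 = 1 \<Longrightarrow> fps_map f fps_X = fps_X"
  by (simp add: fps_eq_iff fps_X_def)

lemma ring_homomorphism_fps_map:
  assumes "ring_homomorphism f"
  shows "ring_homomorphism (fps_map f)"
proof -
  interpret ring_homomorphism f by fact
  show ?thesis
    by unfold_locales (simp_all add: fps_eq_iff fps_mult_nth add mult one zero sum)
qed

lemma derivation_fps_map:
  assumes "derivation D"
  shows "derivation (fps_map D)"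
proof -
  interpret derivation D by fact
  show ?thesis
    by unfold_locales (simp_all add: fps_eq_iff fps_mult_nth add leibniz sum sum.distrib)
qed

lemma fps_map_map_const: "f 0 = 0 \<Longrightarrow> fps_map (fps_map f) (fps_const (fps_const a)) = fps_const (fps_const (f a))"
  by (simp add: fps_eq_iff)

lemma fps_map_map_X: "f 0 = 0 \<Longrightarrow> f 1 = 1 \<Longrightarrow> fps_map (fps_map f) fps_X = fps_X"
  by (simp add: fps_eq_iff fps_X_def)

lemma fps_map_map_const_X: "f 0 = 0 \<Longrightarrow> f 1 = 1 \<Longrightarrow> fps_map (fps_map f) (fps_const fps_X) = fps_const fps_X"
  by (simp add: fps_eq_iff fps_X_def)

definition fps_order_ge :: "nat \<Rightarrow> 'a::zero fps \<Rightarrow> bool" where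
  "fps_order_ge m A \<longleftrightarrow> (\<forall>i<m. A $ i = 0)"

lemma fps_order_ge_0: "fps_order_ge 0 A"
  by (simp add: fps_order_ge_def)

lemma fps_order_ge_mult:
  fixes A B :: "'a::ring_1 fps"
  assumes "fps_order_ge a A" "fps_order_ge b B"
  shows "fps_order_ge (a + b) (A * B)"
  unfolding fps_order_ge_def fps_mult_nth
proof (intro allI impI sum.neutral ballI)
  fix i k assume "i < a + b" "k \<in> {0..i}"
  then show "A $ k * B $ (i - k) = 0"
    using assms unfolding fps_order_ge_def by (cases "k < a") auto
qed

lemma fps_mult_nth_cong_left:
  fixes A B C :: "'a::ring_1 fps"
  shows "(\<And>i. i \<le> j \<Longrightarrow> A $ i = B $ i) \<Longrightarrow> (A * C) $ j = (B * C) $ j"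
  by (simp add: fps_mult_nth)

lemma fps_mult_nth_cong_right:
  fixes A B C :: "'a::ring_1 fps"
  shows "(\<And>i. i \<le> j \<Longrightarrow> A $ i = B $ i) \<Longrightarrow> (C * A) $ j = (C * B) $ j"
  by (simp add: fps_mult_nth)

definition fps_geom :: "'a::ring_1 \<Rightarrow> 'a fps" where
  "fps_geom a = Abs_fps (\<lambda>m. a ^ m)"

lemma fps_geom_nth: "fps_geom a $ m = a ^ m"
  by (simp add: fps_geom_def)

lemma fps_geom_inverse_left: "(1 - fps_X * fps_const a) * fps_geom a = 1"
proof (rule fps_ext)
  fix m
  show "((1 - fps_X * fps_const a) * fps_geom a) $ m = (1 :: 'a fps) $ m"
    by (cases m) (simp_all add: algebra_simps fps_geom_nth mult.assoc)
qed

lemma fps_geom_inverse_right: "fps_geom a * (1 - fps_X * fps_const a) = 1"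
proof (rule fps_ext)
  fix m
  have "fps_geom a * (1 - fps_X * fps_const a) = fps_geom a - fps_geom a * fps_X * fps_const a"
    by (simp add: algebra_simps)
  then show "(fps_geom a * (1 - fps_X * fps_const a)) $ m = (1 :: 'a fps) $ m"
    by (cases m) (simp_all add: fps_geom_nth power_Suc2 del: power_Suc)
qed

definition fps_euler :: "'a::ring_1 fps \<Rightarrow> 'a fps" where
  "fps_euler A = Abs_fps (\<lambda>n. of_nat n * A $ n)"

lemma fps_euler_nth: "fps_euler A $ n = of_nat n * A $ n"
  by (simp add: fps_euler_def)

lemma fps_euler_const: "fps_euler (fps_const a) = 0"
  by (simp add: fps_eq_iff fps_euler_nth)

lemma fps_euler_const_mult: "fps_euler (fps_const a * A) = fps_const a * fps_euler A"
proof (rule fps_ext)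
  fix n
  have "of_nat n * (a * A $ n) = a * (of_nat n * A $ n)"
    by (simp add: mult.assoc[symmetric] mult_of_nat_commute[of n a])
  then show "fps_euler (fps_const a * A) $ n = (fps_const a * fps_euler A) $ n"
    by (simp add: fps_euler_nth)
qed

lemma fps_euler_geom: "fps_euler (fps_geom a) = fps_X * (fps_geom a * (fps_const a * fps_geom a))"
proof (rule fps_ext)
  fix m
  show "fps_euler (fps_geom a) $ m = (fps_X * (fps_geom a * (fps_const a * fps_geom a))) $ m"
  proof (cases m)
    case (Suc i)
    have "(fps_geom a * (fps_const a * fps_geom a)) $ i = (\<Sum>k=0..i. a ^ k * (a * a ^ (i - k)))"
      by (simp add: fps_mult_nth[of "fps_geom a"] fps_geom_nth)
    also have "\<dots> = (\<Sum>k=0..i. a ^ Suc i)"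
      by (intro sum.cong refl) (simp flip: power_Suc power_add)
    finally show ?thesis
      by (simp add: Suc fps_euler_nth fps_geom_nth)
  qed (simp add: fps_euler_nth)
qed

definition series_der :: "(nat \<Rightarrow> 'a \<Rightarrow> 'a) \<Rightarrow> 'a::ring_1 fps \<Rightarrow> 'a fps" where
  "series_der \<delta> A = Abs_fps (\<lambda>j. \<Sum>n\<in>{1..j}. \<delta> n (A $ (j - n)))"

lemma series_der_nth: "series_der \<delta> A $ j = (\<Sum>n\<in>{1..j}. \<delta> n (A $ (j - n)))"
  by (simp add: series_der_def)

lemma series_der_cong: "(\<And>n a. n \<ge> 1 \<Longrightarrow> \<delta> n a = \<epsilon> n a) \<Longrightarrow> series_der \<delta> = series_der \<epsilon>"
  by (simp add: fun_eq_iff fps_eq_iff series_der_nth)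

lemma fps_order_ge_series_der:
  assumes "\<And>n. \<delta> n 0 = 0" "fps_order_ge m A"
  shows "fps_order_ge (Suc m) (series_der \<delta> A)"
  using assms by (auto simp: fps_order_ge_def series_der_nth intro!: sum.neutral)

lemma series_der_eq_trunc:
  assumes "\<And>n. \<delta> n 0 = 0" "j \<le> N"
  shows "series_der \<delta> A $ j = (\<Sum>n\<in>{1..N}. fps_X ^ n * fps_map (\<delta> n) A) $ j"
proof -
  have "(\<Sum>n\<in>{1..N}. fps_X ^ n * fps_map (\<delta> n) A) $ j
      = (\<Sum>n\<in>{1..N}. if j < n then 0 else \<delta> n (A $ (j - n)))"
    by (simp add: fps_sum_nth fps_X_power_mult_nth cong: if_cong)
  also have "\<dots> = (\<Sum>n\<in>{1..j}. \<delta> n (A $ (j - n)))"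
    using assms(2) by (intro sum.mono_neutral_cong_right) auto
  finally show ?thesis by (simp add: series_der_nth)
qed

text \<open>In each degree \<open>series_der \<delta>\<close> agrees with a finite sum of derivations.\<close>
lemma derivation_series_der:
  assumes "\<And>n. derivation (\<delta> n)"
  shows "derivation (series_der \<delta>)"
proof unfold_locales
  have zero: "\<delta> n 0 = 0" for n
    using additive.zero[OF derivation_additive[OF assms]] .
  fix A B :: "'a fps"
  show "series_der \<delta> (A + B) = series_der \<delta> A + series_der \<delta> B"
    by (simp add: fps_eq_iff series_der_nth sum.distrib additive.add[OF derivation_additive[OF assms]])
  show "series_der \<delta> (A * B) = series_der \<delta> A * B + A * series_der \<delta> B"
  proof (rule fps_ext)
    fix j
    define T where "T C = (\<Sum>n\<in>{1..j}. fps_X ^ n * fps_map (\<delta> n) C)" for C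
    interpret T: derivation T
      unfolding T_def
      by (intro derivation_sum derivation_central_mult derivation_fps_map assms
          central_power central_fps_X) simp
    have agree: "series_der \<delta> C $ i = T C $ i" if "i \<le> j" for C i
      unfolding T_def using zero that by (rule series_der_eq_trunc)
    have "series_der \<delta> (A * B) $ j = (T A * B + A * T B) $ j"
      by (simp add: agree T.leibniz)
    also have "\<dots> = (series_der \<delta> A * B + A * series_der \<delta> B) $ j"
      using fps_mult_nth_cong_left[of j "T A" "series_der \<delta> A" B]
        fps_mult_nth_cong_right[of j "T B" "series_der \<delta> B" A] by (simp add: agree)
    finally show "series_der \<delta> (A * B) $ j = (series_der \<delta> A * B + A * series_der \<delta> B) $ j" .
  qed
qed

lemma series_der_commute:
  assumes "\<And>n. additive (\<delta> n)" "\<And>n. additive (\<epsilon> n)"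
    and "\<And>n m a. \<delta> n (\<epsilon> m a) = \<epsilon> m (\<delta> n a)"
  shows "series_der \<delta> (series_der \<epsilon> A) = series_der \<epsilon> (series_der \<delta> A)"
proof (rule fps_ext)
  fix j :: nat
  have interval: "{1..j - n} = {m \<in> {1..j}. n + m \<le> j}" for n
    by auto
  have "series_der \<delta> (series_der \<epsilon> A) $ j
      = (\<Sum>n\<in>{1..j}. \<delta> n (\<Sum>m\<in>{1..j - n}. \<epsilon> m (A $ (j - n - m))))"
    by (simp add: series_der_nth)
  also have "\<dots> = (\<Sum>n\<in>{1..j}. \<Sum>m\<in>{m \<in> {1..j}. n + m \<le> j}. \<delta> n (\<epsilon> m (A $ (j - n - m))))"
    by (simp only: additive.sum[OF assms(1)] interval)
  also have "\<dots> = (\<Sum>m\<in>{1..j}. \<Sum>n\<in>{n \<in> {1..j}. n + m \<le> j}. \<epsilon> m (\<delta> n (A $ (j - m - n))))"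
    by (subst sum.swap_restrict) (simp_all add: assms(3) diff_diff_add add.commute)
  also have "\<dots> = (\<Sum>m\<in>{1..j}. \<epsilon> m (\<Sum>n\<in>{1..j - m}. \<delta> n (A $ (j - m - n))))"
    by (simp only: additive.sum[OF assms(2)] interval add.commute)
  also have "\<dots> = series_der \<epsilon> (series_der \<delta> A) $ j"
    by (simp add: series_der_nth)
  finally show "series_der \<delta> (series_der \<epsilon> A) $ j = series_der \<epsilon> (series_der \<delta> A) $ j" .
qed

lemma fps_euler_series_der:
  assumes "\<And>n. additive (\<delta> n)"
  shows "fps_euler (series_der \<delta> A)
    = series_der \<delta> (fps_euler A) + series_der (\<lambda>n a. of_nat n * \<delta> n a) A"
proof (rule fps_ext)
  fix j
  have "of_nat j * \<delta> n (A $ (j - n))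
      = \<delta> n (of_nat (j - n) * A $ (j - n)) + of_nat n * \<delta> n (A $ (j - n))"
    if "n \<le> j" for n
  proof -
    have "(of_nat j :: 'a) = of_nat (j - n) + of_nat n"
      using that by (simp flip: of_nat_add)
    then show ?thesis
      by (simp add: additive_of_nat_mult[OF assms] distrib_right)
  qed
  then show "fps_euler (series_der \<delta> A) $ j
      = (series_der \<delta> (fps_euler A) + series_der (\<lambda>n a. of_nat n * \<delta> n a) A) $ j"
    by (simp add: fps_euler_nth series_der_nth sum_distrib_left sum.distrib)
qed

section \<open>Power series in two variables\<close>

definition fps2_order_ge :: "nat \<Rightarrow> 'a::zero fps fps \<Rightarrow> bool" where
  "fps2_order_ge d A \<longleftrightarrow> (\<forall>i j. i + j < d \<longrightarrow> A $ i $ j = 0)"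

lemma fps2_order_ge_add:
  "fps2_order_ge d A \<Longrightarrow> fps2_order_ge d B \<Longrightarrow> fps2_order_ge d (A + B)"
  for A B :: "'a::ring_1 fps fps"
  by (simp add: fps2_order_ge_def)

lemma fps2_order_ge_diff:
  "fps2_order_ge d A \<Longrightarrow> fps2_order_ge d B \<Longrightarrow> fps2_order_ge d (A - B)"
  for A B :: "'a::ring_1 fps fps"
  by (simp add: fps2_order_ge_def)

lemma fps2_order_ge_X_mult: "fps2_order_ge 1 (fps_X * A)"
  for A :: "'a::ring_1 fps fps"
  by (simp add: fps2_order_ge_def)

lemma fps2_order_ge_v_mult: "fps2_order_ge 1 (fps_const fps_X * A)"
  for A :: "'a::ring_1 fps fps"
  by (simp add: fps2_order_ge_def)

lemma fps2_mult_nth: "(A * B) $ i $ j = (\<Sum>a=0..i. \<Sum>b=0..j. A $ a $ b * B $ (i - a) $ (j - b))"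
  by (simp add: fps_mult_nth fps_sum_nth)

lemma fps2_order_ge_mult:
  fixes A B :: "'a::ring_1 fps fps"
  assumes "fps2_order_ge d1 A" "fps2_order_ge d2 B"
  shows "fps2_order_ge (d1 + d2) (A * B)"
  unfolding fps2_order_ge_def fps2_mult_nth
proof (intro allI impI sum.neutral ballI)
  fix i j a b assume "i + j < d1 + d2" "a \<in> {0..i}" "b \<in> {0..j}"
  then show "A $ a $ b * B $ (i - a) $ (j - b) = 0"
    using assms unfolding fps2_order_ge_def by (cases "a + b < d1") auto
qed

lemma fps2_order_ge_power:
  fixes A :: "'a::ring_1 fps fps"
  assumes "fps2_order_ge 1 A"
  shows "fps2_order_ge n (A ^ n)"
proof (induction n)
  case 0
  show ?case by (simp add: fps2_order_ge_def)
next
  case (Suc n)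
  then show ?case using fps2_order_ge_mult[OF assms Suc.IH] by simp
qed

lemma fps2_mult_nth_cong_left:
  fixes A B C :: "'a::ring_1 fps fps"
  shows "(\<And>a b. a \<le> i \<Longrightarrow> b \<le> j \<Longrightarrow> A $ a $ b = B $ a $ b) \<Longrightarrow> (A * C) $ i $ j = (B * C) $ i $ j"
  unfolding fps2_mult_nth by (intro sum.cong refl) auto

lemma fps2_mult_nth_cong_right:
  fixes A B C :: "'a::ring_1 fps fps"
  shows "(\<And>a b. a \<le> i \<Longrightarrow> b \<le> j \<Longrightarrow> A $ a $ b = B $ a $ b) \<Longrightarrow> (C * A) $ i $ j = (C * B) $ i $ j"
  unfolding fps2_mult_nth by (intro sum.cong refl) auto

definition fps2_geom :: "'a::ring_1 fps fps \<Rightarrow> 'a fps fps" where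
  "fps2_geom A = Abs_fps (\<lambda>i. Abs_fps (\<lambda>j. \<Sum>n\<le>i + j. (A ^ n) $ i $ j))"

lemma fps2_geom_nth: "fps2_geom A $ i $ j = (\<Sum>n\<le>i + j. (A ^ n) $ i $ j)"
  by (simp add: fps2_geom_def)

lemma fps2_geom_eq_trunc:
  assumes "fps2_order_ge 1 A" "i + j \<le> N"
  shows "fps2_geom A $ i $ j = (\<Sum>n\<le>N. A ^ n) $ i $ j"
proof -
  have "(\<Sum>n\<le>N. A ^ n) $ i $ j = (\<Sum>n\<le>N. (A ^ n) $ i $ j)"
    by (simp add: fps_sum_nth)
  also have "\<dots> = (\<Sum>n\<le>i + j. (A ^ n) $ i $ j)"
    using fps2_order_ge_power[OF assms(1)] assms(2)
    by (intro sum.mono_neutral_right) (auto simp: fps2_order_ge_def)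
  finally show ?thesis by (simp add: fps2_geom_nth)
qed

lemma geometric_sum_telescope:
  fixes A :: "'a::ring_1"
  shows "(1 - A) * (\<Sum>n\<le>N. A ^ n) = 1 - A ^ Suc N"
    and "(\<Sum>n\<le>N. A ^ n) * (1 - A) = 1 - A ^ Suc N"
proof (induction N)
  case (Suc N)
  have "(1 - A) * (\<Sum>n\<le>Suc N. A ^ n) = (1 - A) * (\<Sum>n\<le>N. A ^ n) + (1 - A) * A ^ Suc N"
    by (simp add: distrib_left)
  also have "\<dots> = 1 - A ^ Suc (Suc N)"
    by (simp only: Suc.IH(1)) (simp add: left_diff_distrib)
  finally show "(1 - A) * (\<Sum>n\<le>Suc N. A ^ n) = 1 - A ^ Suc (Suc N)" .
  have "(\<Sum>n\<le>Suc N. A ^ n) * (1 - A) = (\<Sum>n\<le>N. A ^ n) * (1 - A) + A ^ Suc N * (1 - A)"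
    by (simp add: distrib_right)
  also have "\<dots> = 1 - A ^ Suc (Suc N)"
    by (simp only: Suc.IH(2)) (simp add: right_diff_distrib power_Suc2 del: power_Suc)
  finally show "(\<Sum>n\<le>Suc N. A ^ n) * (1 - A) = 1 - A ^ Suc (Suc N)" .
qed simp_all

lemma fps2_geom_inverse:
  fixes A :: "'a::ring_1 fps fps"
  assumes "fps2_order_ge 1 A"
  shows "(1 - A) * fps2_geom A = 1" "fps2_geom A * (1 - A) = 1"
proof -
  have high: "(A ^ Suc (i + j)) $ i $ j = 0" for i j
    using fps2_order_ge_power[OF assms, of "Suc (i + j)"] by (simp add: fps2_order_ge_def)
  show "(1 - A) * fps2_geom A = 1"
  proof (intro fps_ext)
    fix i j
    have "((1 - A) * fps2_geom A) $ i $ j = ((1 - A) * (\<Sum>n\<le>i + j. A ^ n)) $ i $ j"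
      by (rule fps2_mult_nth_cong_right) (simp add: fps2_geom_eq_trunc[OF assms])
    then show "((1 - A) * fps2_geom A) $ i $ j = (1 :: 'a fps fps) $ i $ j"
      by (simp only: geometric_sum_telescope) (simp add: high del: power_Suc)
  qed
  show "fps2_geom A * (1 - A) = 1"
  proof (intro fps_ext)
    fix i j
    have "(fps2_geom A * (1 - A)) $ i $ j = ((\<Sum>n\<le>i + j. A ^ n) * (1 - A)) $ i $ j"
      by (rule fps2_mult_nth_cong_left) (simp add: fps2_geom_eq_trunc[OF assms])
    then show "(fps2_geom A * (1 - A)) $ i $ j = (1 :: 'a fps fps) $ i $ j"
      by (simp only: geometric_sum_telescope) (simp add: high del: power_Suc)
  qed
qed

abbreviation fps2_v :: "'a::{zero, one} fps fps" where
  "fps2_v \<equiv> fps_const fps_X"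

abbreviation fps2_const :: "'a::zero \<Rightarrow> 'a fps fps" where
  "fps2_const a \<equiv> fps_const (fps_const a)"

lemma fps2_geom_inverse_v:
  fixes a :: "'a::ring_1"
  shows "(1 - fps2_v * fps2_const a) * fps_const (fps_geom a) = 1"
  "fps_const (fps_geom a) * (1 - fps2_v * fps2_const a) = 1"
proof -
  have e: "1 - fps2_v * fps2_const a = fps_const (1 - fps_X * fps_const a)"
    by (simp add: fps_eq_iff)
  show "(1 - fps2_v * fps2_const a) * fps_const (fps_geom a) = 1"
    "fps_const (fps_geom a) * (1 - fps2_v * fps2_const a) = 1"
    unfolding e by (simp_all only: fps_const_mult fps_geom_inverse_left fps_geom_inverse_right
        fps_const_1_eq_1)
qed

section \<open>The ring of noncommutative series\<close>

lemma ncmult_assoc: "ncmult (ncmult f g) h = ncmult f (ncmult g h)"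
proof
  fix w :: word
  define n where "n = length w"
  define \<Phi> where "\<Phi> l m = f (take l w) * g (take m (drop l w)) * h (drop (l + m) w)" for l m
  have "ncmult (ncmult f g) h w = (\<Sum>k\<le>n. \<Sum>l\<le>k. \<Phi> l (k - l))"
    unfolding ncmult_def n_def \<Phi>_def
    by (intro sum.cong refl) (auto simp: sum_distrib_right drop_take min_def)
  also have "\<dots> = (\<Sum>(l,m)\<in>{(l,m). l + m \<le> n}. \<Phi> l m)"
    by (rule sum.triangle_reindex_eq[symmetric])
  also have "{(l,m). l + m \<le> n} = Sigma {..n} (\<lambda>l. {..n - l})"
    by auto
  also have "(\<Sum>(l,m)\<in>Sigma {..n} (\<lambda>l. {..n - l}). \<Phi> l m) = (\<Sum>l\<le>n. \<Sum>m\<le>n - l. \<Phi> l m)"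
    by (simp add: sum.Sigma)
  also have "\<dots> = ncmult f (ncmult g h) w"
    unfolding ncmult_def n_def \<Phi>_def
    by (intro sum.cong refl) (auto simp: sum_distrib_left mult.assoc add.commute)
  finally show "ncmult (ncmult f g) h w = ncmult f (ncmult g h) w" .
qed

lemma ncmult_ncone_left: "ncmult ncone f = f"
proof
  fix w :: word
  have "ncmult ncone f w = (\<Sum>k\<le>length w. if k = 0 then f w else 0)"
    unfolding ncmult_def ncone_def ncmon_def by (intro sum.cong refl) auto
  then show "ncmult ncone f w = f w" by simp
qed

lemma ncmult_ncone_right: "ncmult f ncone = f"
proof
  fix w :: word
  have "ncmult f ncone w = (\<Sum>k\<le>length w. if k = length w then f w else 0)"
    unfolding ncmult_def ncone_def ncmon_def by (intro sum.cong refl) auto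
  then show "ncmult f ncone w = f w" by simp
qed

text \<open>A copy of \<open>ncp\<close>, on which the concatenation product becomes the ring multiplication
  (functions already carry the pointwise one).\<close>
typedef nc = "UNIV :: ncp set" by simp

setup_lifting type_definition_nc

instantiation nc :: ring_1
begin
lift_definition zero_nc :: nc is nczero .
lift_definition one_nc :: nc is ncone .
lift_definition plus_nc :: "nc \<Rightarrow> nc \<Rightarrow> nc" is ncadd .
lift_definition minus_nc :: "nc \<Rightarrow> nc \<Rightarrow> nc" is ncsub .
lift_definition uminus_nc :: "nc \<Rightarrow> nc" is ncneg .
lift_definition times_nc :: "nc \<Rightarrow> nc \<Rightarrow> nc" is ncmult .
instance
proof
  fix a b c :: nc
  show "a * b * c = a * (b * c)" by transfer (rule ncmult_assoc)
  show "1 * a = a" by transfer (rule ncmult_ncone_left)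
  show "a * 1 = a" by transfer (rule ncmult_ncone_right)
  show "(a + b) * c = a * c + b * c"
    by transfer (auto simp: ncmult_def ncadd_def fun_eq_iff sum.distrib algebra_simps)
  show "a * (b + c) = a * b + a * c"
    by transfer (auto simp: ncmult_def ncadd_def fun_eq_iff sum.distrib algebra_simps)
  show "a + b + c = a + (b + c)" by transfer (auto simp: ncadd_def)
  show "a + b = b + a" by transfer (auto simp: ncadd_def)
  show "0 + a = a" by transfer (auto simp: ncadd_def nczero_def)
  show "- a + a = 0" by transfer (auto simp: ncadd_def nczero_def ncneg_def)
  show "a - b = a + - b" by transfer (auto simp: ncadd_def ncsub_def ncneg_def)
  show "(0::nc) \<noteq> 1" by transfer (auto simp: nczero_def ncone_def ncmon_def fun_eq_iff)
qed
end

lemma nc_eqI: "(\<And>w. Rep_nc a w = Rep_nc b w) \<Longrightarrow> a = b"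
  by (metis Rep_nc_inject ext)

declare Abs_nc_inverse[simplified, simp] Rep_nc_inverse[simp]

lemma Rep_nc_add [simp]: "Rep_nc (a + b) w = Rep_nc a w + Rep_nc b w"
  by transfer (simp add: ncadd_def)

lemma Rep_nc_diff [simp]: "Rep_nc (a - b) w = Rep_nc a w - Rep_nc b w"
  by transfer (simp add: ncsub_def)

lemma Rep_nc_uminus [simp]: "Rep_nc (- a) w = - Rep_nc a w"
  by transfer (simp add: ncneg_def)

lemma Rep_nc_zero [simp]: "Rep_nc 0 w = 0"
  by transfer (simp add: nczero_def)

lemma Rep_nc_one: "Rep_nc 1 = ncone"
  by transfer simp

lemma Rep_nc_sum: "Rep_nc (sum f A) w = (\<Sum>a\<in>A. Rep_nc (f a) w)"
  by (induction A rule: infinite_finite_induct) auto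

lemma Rep_nc_mult: "Rep_nc (a * b) = ncmult (Rep_nc a) (Rep_nc b)"
  by transfer simp

lemma Abs_nc_ncadd [simp]: "Abs_nc (ncadd f g) = Abs_nc f + Abs_nc g"
  by transfer simp

lemma Abs_nc_ncsub [simp]: "Abs_nc (ncsub f g) = Abs_nc f - Abs_nc g"
  by transfer simp

lemma Abs_nc_ncneg [simp]: "Abs_nc (ncneg f) = - Abs_nc f"
  by transfer simp

lemma Abs_nc_ncmult [simp]: "Abs_nc (ncmult f g) = Abs_nc f * Abs_nc g"
  by transfer simp

lemma Abs_nc_nczero [simp]: "Abs_nc nczero = 0"
  by transfer simp

lemma Abs_nc_ncone [simp]: "Abs_nc ncone = 1"
  by transfer simp

lemma Abs_nc_ncpow [simp]: "Abs_nc (ncpow f n) = Abs_nc f ^ n"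
  by (induction n) simp_all

definition nc_monom :: "word \<Rightarrow> nc" where "nc_monom v = Abs_nc (ncmon v)"

definition nc_const :: "rat poly \<Rightarrow> nc" where "nc_const c = Abs_nc (ncsmult c ncone)"

definition nc_x :: nc where "nc_x = nc_monom [X]"
definition nc_y :: nc where "nc_y = nc_monom [Y]"
definition nc_z :: nc where "nc_z = nc_x + nc_y"

lemma Abs_nc_ncx [simp]: "Abs_nc ncx = nc_x"
  by (simp add: ncx_def nc_x_def nc_monom_def)

lemma Abs_nc_ncy [simp]: "Abs_nc ncy = nc_y"
  by (simp add: ncy_def nc_y_def nc_monom_def)

lemma nc_monom_append: "nc_monom (a @ b) = nc_monom a * nc_monom b"
proof (rule nc_eqI)
  fix w
  have "Rep_nc (nc_monom a * nc_monom b) w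
      = (\<Sum>k\<le>length w. if k = length a \<and> w = a @ b then 1 else 0)"
    unfolding Rep_nc_mult ncmult_def nc_monom_def
    by (intro sum.cong refl) (auto simp: ncmon_def append_eq_conv_conj)
  then show "Rep_nc (nc_monom (a @ b)) w = Rep_nc (nc_monom a * nc_monom b) w"
    by (simp add: nc_monom_def ncmon_def)
qed

lemma nc_monom_Nil: "nc_monom [] = 1"
  by (rule nc_eqI) (simp add: nc_monom_def Rep_nc_one ncone_def)

lemma nc_monom_Cons: "nc_monom (a # b) = nc_monom [a] * nc_monom b"
  using nc_monom_append[of "[a]" b] by simp

lemma Rep_nc_const_mult: "Rep_nc (nc_const c * a) w = c * Rep_nc a w"
proof -
  have "Rep_nc (nc_const c * a) w = (\<Sum>k\<le>length w. if k = 0 then c * Rep_nc a w else 0)"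
    unfolding Rep_nc_mult ncmult_def nc_const_def
    by (intro sum.cong refl) (auto simp: ncsmult_def ncone_def ncmon_def)
  then show ?thesis by simp
qed

lemma Rep_nc_mult_const: "Rep_nc (a * nc_const c) w = c * Rep_nc a w"
proof -
  have "Rep_nc (a * nc_const c) w = (\<Sum>k\<le>length w. if k = length w then c * Rep_nc a w else 0)"
    unfolding Rep_nc_mult ncmult_def nc_const_def
    by (intro sum.cong refl) (auto simp: ncsmult_def ncone_def ncmon_def)
  then show ?thesis by simp
qed

lemma Abs_nc_ncsmult [simp]: "Abs_nc (ncsmult c f) = nc_const c * Abs_nc f"
  by (rule nc_eqI) (simp add: Rep_nc_const_mult ncsmult_def)

lemma nc_const_commute: "nc_const c * a = a * nc_const c"
  by (rule nc_eqI) (simp add: Rep_nc_const_mult Rep_nc_mult_const)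

lemma nc_const_mult: "nc_const (c * d) = nc_const c * nc_const d"
  by (rule nc_eqI) (simp only: Rep_nc_const_mult, simp add: nc_const_def ncsmult_def)

lemma nc_const_add: "nc_const (c + d) = nc_const c + nc_const d"
  by (rule nc_eqI) (simp add: nc_const_def ncsmult_def algebra_simps)

lemma nc_const_one: "nc_const 1 = 1"
  by (rule nc_eqI) (simp add: nc_const_def ncsmult_def Rep_nc_one)

lemma nc_const_zero: "nc_const 0 = 0"
  by (rule nc_eqI) (simp add: nc_const_def ncsmult_def)

lemma nc_const_of_nat: "nc_const (of_nat n) = of_nat n"
  by (induction n) (simp_all add: nc_const_zero nc_const_one nc_const_add)

lemma nc_of_nat_mult_cancel:
  assumes "of_nat j * a = (of_nat j * b :: nc)" "j > 0"
  shows "a = b"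
proof (rule nc_eqI)
  fix w
  have "Rep_nc (nc_const (of_nat j) * a) w = Rep_nc (nc_const (of_nat j) * b) w"
    using assms(1) by (simp add: nc_const_of_nat)
  then show "Rep_nc a w = Rep_nc b w"
    using assms(2) by (simp add: Rep_nc_const_mult)
qed

section \<open>Linear extensions of maps on words\<close>

definition nc_order_ge :: "nat \<Rightarrow> nc \<Rightarrow> bool" where
  "nc_order_ge d a \<longleftrightarrow> (\<forall>w. length w < d \<longrightarrow> Rep_nc a w = 0)"

lemma nc_order_ge_0: "nc_order_ge 0 a"
  by (simp add: nc_order_ge_def)

lemma nc_order_ge_add: "nc_order_ge d a \<Longrightarrow> nc_order_ge d b \<Longrightarrow> nc_order_ge d (a + b)"
  by (simp add: nc_order_ge_def)

lemma nc_order_ge_uminus: "nc_order_ge d a \<Longrightarrow> nc_order_ge d (- a)"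
  by (simp add: nc_order_ge_def)

lemma nc_order_ge_const_mult: "nc_order_ge d a \<Longrightarrow> nc_order_ge d (nc_const c * a)"
  by (simp add: nc_order_ge_def Rep_nc_const_mult)

lemma nc_order_ge_monom: "nc_order_ge (length v) (nc_monom v)"
  by (auto simp: nc_order_ge_def nc_monom_def ncmon_def)

lemma nc_order_ge_mult:
  assumes a: "nc_order_ge d1 a" and b: "nc_order_ge d2 b"
  shows "nc_order_ge (d1 + d2) (a * b)"
  unfolding nc_order_ge_def Rep_nc_mult ncmult_def
proof (intro allI impI sum.neutral ballI)
  fix w :: word and k
  assume "length w < d1 + d2" "k \<in> {..length w}"
  then show "Rep_nc a (take k w) * Rep_nc b (drop k w) = 0"
    using a b by (cases "k < d1") (auto simp: nc_order_ge_def)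
qed

definition length_raising :: "(word \<Rightarrow> nc) \<Rightarrow> bool" where
  "length_raising F \<longleftrightarrow> (\<forall>v. nc_order_ge (length v) (F v))"

lemma length_raising_monom: "length_raising nc_monom"
  by (simp add: length_raising_def nc_order_ge_monom)

definition lin_ext :: "(word \<Rightarrow> nc) \<Rightarrow> nc \<Rightarrow> nc" where
  "lin_ext F a = Abs_nc (nclin (\<lambda>v. Rep_nc (F v)) (Rep_nc a))"

lemma finite_length_le: "finite {v :: word. length v \<le> n}"
proof -
  have letters: "(UNIV :: letter set) = {X, Y}"
    using letter.exhaust by blast
  have "finite (UNIV :: letter set)"
    unfolding letters by simp
  then show ?thesis
    using finite_lists_length_le[of "UNIV :: letter set" n] by simp
qed

lemma Rep_lin_ext:
  "Rep_nc (lin_ext F a) w = (\<Sum>v | length v \<le> length w. Rep_nc a v * Rep_nc (F v) w)"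
  by (simp add: lin_ext_def nclin_def)

lemma Rep_lin_ext_upto:
  assumes "length_raising F" "length w \<le> N"
  shows "Rep_nc (lin_ext F a) w = (\<Sum>v | length v \<le> N. Rep_nc a v * Rep_nc (F v) w)"
  unfolding Rep_lin_ext
proof (rule sum.mono_neutral_left)
  show "\<forall>v\<in>{v. length v \<le> N} - {v. length v \<le> length w}. Rep_nc a v * Rep_nc (F v) w = 0"
    using assms(1) by (auto simp: length_raising_def nc_order_ge_def)
qed (use assms(2) finite_length_le in auto)

lemma additive_lin_ext: "additive (lin_ext F)"
  by unfold_locales (rule nc_eqI, simp add: Rep_lin_ext sum.distrib algebra_simps)

lemma lin_ext_const_mult: "lin_ext F (nc_const c * a) = nc_const c * lin_ext F a"
  by (rule nc_eqI) (simp add: Rep_lin_ext Rep_nc_const_mult sum_distrib_left mult.assoc)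

lemma lin_ext_monom:
  assumes "length_raising F"
  shows "lin_ext F (nc_monom u) = F u"
proof (rule nc_eqI)
  fix w
  have "Rep_nc (lin_ext F (nc_monom u)) w = (\<Sum>v | length v \<le> length w. if v = u then Rep_nc (F u) w else 0)"
    unfolding Rep_lin_ext nc_monom_def by (intro sum.cong refl) (simp add: ncmon_def)
  also have "\<dots> = (if length u \<le> length w then Rep_nc (F u) w else 0)"
    using finite_length_le by (simp add: sum.delta')
  also have "\<dots> = Rep_nc (F u) w"
    using assms by (auto simp: length_raising_def nc_order_ge_def)
  finally show "Rep_nc (lin_ext F (nc_monom u)) w = Rep_nc (F u) w" .
qed

lemma lin_ext_monom_self: "lin_ext nc_monom a = a"
proof (rule nc_eqI)
  fix w
  have "Rep_nc (lin_ext nc_monom a) w = (\<Sum>v | length v \<le> length w. if v = w then Rep_nc a w else 0)"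
    unfolding Rep_lin_ext nc_monom_def by (intro sum.cong refl) (simp add: ncmon_def)
  also have "\<dots> = Rep_nc a w"
    using finite_length_le by (simp add: sum.delta')
  finally show "Rep_nc (lin_ext nc_monom a) w = Rep_nc a w" .
qed

lemma lin_ext_lin_ext:
  assumes F: "length_raising F" and G: "length_raising G"
  shows "lin_ext F (lin_ext G a) = lin_ext (\<lambda>v. lin_ext F (G v)) a"
proof (rule nc_eqI)
  fix w :: word
  define W where "W = {v :: word. length v \<le> length w}"
  have "Rep_nc (lin_ext F (lin_ext G a)) w = (\<Sum>u\<in>W. Rep_nc (lin_ext G a) u * Rep_nc (F u) w)"
    unfolding Rep_lin_ext[of F] W_def ..
  also have "\<dots> = (\<Sum>u\<in>W. (\<Sum>v\<in>W. Rep_nc a v * Rep_nc (G v) u) * Rep_nc (F u) w)"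
    by (intro sum.cong refl) (simp add: W_def Rep_lin_ext_upto[OF G])
  also have "\<dots> = (\<Sum>u\<in>W. \<Sum>v\<in>W. Rep_nc a v * (Rep_nc (G v) u * Rep_nc (F u) w))"
    by (simp add: sum_distrib_right mult.assoc)
  also have "\<dots> = (\<Sum>v\<in>W. Rep_nc a v * (\<Sum>u\<in>W. Rep_nc (G v) u * Rep_nc (F u) w))"
    by (subst sum.swap) (simp add: sum_distrib_left)
  also have "\<dots> = (\<Sum>v\<in>W. Rep_nc a v * Rep_nc (lin_ext F (G v)) w)"
    by (intro sum.cong refl) (simp add: W_def Rep_lin_ext_upto[OF F, where N = "length w"])
  also have "\<dots> = Rep_nc (lin_ext (\<lambda>v. lin_ext F (G v)) a) w"
    unfolding Rep_lin_ext[of "\<lambda>v. lin_ext F (G v)"] W_def ..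
  finally show "Rep_nc (lin_ext F (lin_ext G a)) w = Rep_nc (lin_ext (\<lambda>v. lin_ext F (G v)) a) w" .
qed

lemma Rep_lin_ext_mult:
  fixes w :: word
  assumes "length_raising F"
  defines "W \<equiv> {v :: word. length v \<le> length w}"
  shows "Rep_nc (lin_ext F (p * q)) w = (\<Sum>a\<in>W. \<Sum>b\<in>W. Rep_nc p a * Rep_nc q b * Rep_nc (F (a @ b)) w)"
proof -
  let ?f = "\<lambda>a b. Rep_nc p a * Rep_nc q b * Rep_nc (F (a @ b)) w"
  have "Rep_nc (lin_ext F (p * q)) w = (\<Sum>v\<in>W. \<Sum>k\<le>length v. ?f (take k v) (drop k v))"
    unfolding Rep_lin_ext Rep_nc_mult ncmult_def W_def by (simp add: sum_distrib_right)
  also have "\<dots> = (\<Sum>(v, k)\<in>Sigma W (\<lambda>v. {..length v}). ?f (take k v) (drop k v))"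
    by (rule sum.Sigma) (auto simp: W_def finite_length_le)
  also have "\<dots> = (\<Sum>(a, b)\<in>{(a, b). length a + length b \<le> length w}. ?f a b)"
    by (rule sum.reindex_bij_witness[where i="\<lambda>(a, b). (a @ b, length a)"
          and j="\<lambda>(v, k). (take k v, drop k v)"]) (auto simp: W_def min_def)
  also have "\<dots> = (\<Sum>(a, b)\<in>W \<times> W. ?f a b)"
  proof (rule sum.mono_neutral_left)
    have "Rep_nc (F (a @ b)) w = 0" if "length w < length a + length b" for a b
      using assms(1) that by (simp add: length_raising_def nc_order_ge_def)
    then show "\<forall>i\<in>W \<times> W - {(a, b). length a + length b \<le> length w}. (case i of (a, b) \<Rightarrow> ?f a b) = 0"
      by (auto simp: not_le) (meson not_le)
  qed (auto simp: W_def finite_length_le)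
  finally show ?thesis
    by (simp add: sum.cartesian_product)
qed

lemma Rep_mult_lin_ext:
  fixes w :: word
  assumes F: "length_raising F" and G: "length_raising G"
  defines "W \<equiv> {v :: word. length v \<le> length w}"
  shows "Rep_nc (lin_ext F p * lin_ext G q) w
    = (\<Sum>a\<in>W. \<Sum>b\<in>W. Rep_nc p a * Rep_nc q b * Rep_nc (F a * G b) w)"
proof -
  have "Rep_nc (lin_ext F p * lin_ext G q) w
      = (\<Sum>k\<le>length w. (\<Sum>a\<in>W. Rep_nc p a * Rep_nc (F a) (take k w))
                      * (\<Sum>b\<in>W. Rep_nc q b * Rep_nc (G b) (drop k w)))"
    unfolding Rep_nc_mult ncmult_def W_def
    by (intro sum.cong refl)
      (simp add: Rep_lin_ext_upto[OF F, where N = "length w"] Rep_lin_ext_upto[OF G, where N = "length w"])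
  also have "\<dots> = (\<Sum>a\<in>W. \<Sum>b\<in>W. \<Sum>k\<le>length w.
      Rep_nc p a * Rep_nc q b * (Rep_nc (F a) (take k w) * Rep_nc (G b) (drop k w)))"
    by (simp add: sum_product algebra_simps) (subst sum.swap, simp add: sum.swap[of _ W "{..length w}"])
  also have "\<dots> = (\<Sum>a\<in>W. \<Sum>b\<in>W. Rep_nc p a * Rep_nc q b * Rep_nc (F a * G b) w)"
    by (simp add: Rep_nc_mult ncmult_def sum_distrib_left)
  finally show ?thesis .
qed

lemma lin_ext_mult:
  assumes "length_raising F" "length_raising F1" "length_raising F2"
    "length_raising G1" "length_raising G2"
    and "\<And>a b. Rep_nc q b \<noteq> 0 \<Longrightarrow> F (a @ b) = F1 a * F2 b + G1 a * G2 b"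
  shows "lin_ext F (p * q) = lin_ext F1 p * lin_ext F2 q + lin_ext G1 p * lin_ext G2 q"
proof (rule nc_eqI)
  fix w
  have "Rep_nc p a * Rep_nc q b * Rep_nc (F (a @ b)) w
      = Rep_nc p a * Rep_nc q b * Rep_nc (F1 a * F2 b) w
        + Rep_nc p a * Rep_nc q b * Rep_nc (G1 a * G2 b) w" for a b
    using assms(6)[of b a] by (cases "Rep_nc q b = 0") (simp_all add: algebra_simps)
  then show "Rep_nc (lin_ext F (p * q)) w
      = Rep_nc (lin_ext F1 p * lin_ext F2 q + lin_ext G1 p * lin_ext G2 q) w"
    by (simp add: Rep_lin_ext_mult[OF assms(1)] Rep_mult_lin_ext[OF assms(2,3)]
        Rep_mult_lin_ext[OF assms(4,5)] sum.distrib)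
qed

section \<open>The automorphisms \<open>\<sigma>\<^sub>c\<close> and the maps \<open>S\<^sub>c\<close>\<close>

definition nc_sigma_word :: "rat poly \<Rightarrow> word \<Rightarrow> nc" where
  "nc_sigma_word c v = Abs_nc (sigma_word c v)"

definition nc_sigma :: "rat poly \<Rightarrow> nc \<Rightarrow> nc" where
  "nc_sigma c = lin_ext (nc_sigma_word c)"

lemma nc_sigma_word_Nil: "nc_sigma_word c [] = 1"
  by (simp add: nc_sigma_word_def Abs_nc_ncone)

lemma nc_sigma_word_Cons: "nc_sigma_word c (a # v) = Abs_nc (sigma_letter c a) * nc_sigma_word c v"
  by (simp add: nc_sigma_word_def Abs_nc_ncmult)

lemma nc_sigma_word_append: "nc_sigma_word c (u @ v) = nc_sigma_word c u * nc_sigma_word c v"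
  by (induction u) (simp_all add: nc_sigma_word_Nil nc_sigma_word_Cons mult.assoc)

lemma length_raising_nc_sigma_word: "length_raising (nc_sigma_word c)"
  unfolding length_raising_def
proof
  fix v
  have letter: "nc_order_ge 1 (Abs_nc (sigma_letter c a))" for a
    using nc_order_ge_monom[of "[X]"] nc_order_ge_monom[of "[Y]"]
    by (cases a) (auto simp: nc_x_def nc_y_def intro: nc_order_ge_add nc_order_ge_const_mult)
  show "nc_order_ge (length v) (nc_sigma_word c v)"
  proof (induction v)
    case (Cons a v)
    show ?case
      using nc_order_ge_mult[OF letter Cons.IH] by (simp add: nc_sigma_word_Cons)
  qed (simp add: nc_order_ge_0)
qed

lemma length_raising_zero: "length_raising (\<lambda>v. 0)"
  by (simp add: length_raising_def nc_order_ge_def)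

lemma lin_ext_zero_fun: "lin_ext (\<lambda>v. 0) a = 0"
  by (rule nc_eqI) (simp add: Rep_lin_ext)

lemma nc_sigma_monom: "nc_sigma c (nc_monom v) = nc_sigma_word c v"
  by (simp add: nc_sigma_def lin_ext_monom length_raising_nc_sigma_word)

lemma ring_homomorphism_nc_sigma: "ring_homomorphism (nc_sigma c)"
proof -
  interpret additive "nc_sigma c"
    unfolding nc_sigma_def by (rule additive_lin_ext)
  show ?thesis
  proof unfold_locales
    fix a b
    have "lin_ext (nc_sigma_word c) (a * b)
        = lin_ext (nc_sigma_word c) a * lin_ext (nc_sigma_word c) b
          + lin_ext (\<lambda>v. 0) a * lin_ext (\<lambda>v. 0) b"
      by (rule lin_ext_mult) (simp_all add: length_raising_nc_sigma_word length_raising_zero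
          nc_sigma_word_append)
    then show "nc_sigma c (a * b) = nc_sigma c a * nc_sigma c b"
      by (simp add: nc_sigma_def lin_ext_zero_fun)
    show "nc_sigma c 1 = 1"
      using nc_sigma_monom[of c "[]"] by (simp add: nc_monom_Nil nc_sigma_word_Nil)
  qed
qed

lemma nc_sigma_const_mult: "nc_sigma c (nc_const d * a) = nc_const d * nc_sigma c a"
  by (simp add: nc_sigma_def lin_ext_const_mult)

lemma nc_sigma_const: "nc_sigma c (nc_const d) = nc_const d"
  using nc_sigma_const_mult[of c d 1] ring_homomorphism.one[OF ring_homomorphism_nc_sigma] by simp

lemma nc_sigma_x: "nc_sigma c nc_x = nc_x"
proof -
  have "nc_sigma c nc_x = nc_sigma_word c [X]"
    by (simp add: nc_x_def nc_sigma_monom)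
  then show ?thesis
    by (simp add: nc_sigma_word_Cons nc_sigma_word_Nil)
qed

lemma nc_sigma_y: "nc_sigma c nc_y = nc_const c * nc_x + nc_y"
proof -
  have "nc_sigma c nc_y = nc_sigma_word c [Y]"
    by (simp add: nc_y_def nc_sigma_monom)
  then show ?thesis
    by (simp add: nc_sigma_word_Cons nc_sigma_word_Nil)
qed

lemma nc_sigma_sigma_word_neg: "nc_sigma c (nc_sigma_word (- c) v) = nc_monom v"
proof (induction v)
  case Nil
  show ?case
    using nc_sigma_monom[of c "[]"] by (simp add: nc_sigma_word_Nil nc_monom_Nil)
next
  case (Cons a v)
  interpret ring_homomorphism "nc_sigma c"
    by (rule ring_homomorphism_nc_sigma)
  have "nc_sigma c (Abs_nc (sigma_letter (- c) a)) = nc_monom [a]"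
  proof (cases a)
    case Y
    have "nc_sigma c (nc_const (- c) * nc_x + nc_y) = (nc_const (- c) + nc_const c) * nc_x + nc_y"
      by (simp add: add nc_sigma_const_mult nc_sigma_x nc_sigma_y algebra_simps)
    then show ?thesis
      by (simp add: Y flip: nc_const_add) (simp add: nc_const_zero nc_y_def)
  qed (use nc_sigma_x[of c] in \<open>simp add: nc_x_def\<close>)
  then show ?case
    by (simp add: nc_sigma_word_Cons mult Cons.IH flip: nc_monom_Cons)
qed

definition nc_S_word :: "rat poly \<Rightarrow> word \<Rightarrow> nc" where
  "nc_S_word c v = Abs_nc (S_word c v)"

definition nc_S :: "rat poly \<Rightarrow> nc \<Rightarrow> nc" where
  "nc_S c = lin_ext (nc_S_word c)"

lemma Abs_nc_Sop: "Abs_nc (Sop c f) = nc_S c (Abs_nc f)"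
  by (simp add: Sop_def nc_S_def lin_ext_def nc_S_word_def)

lemma nc_S_word_eq:
  "nc_S_word c v = (if v = [] then 1 else nc_sigma_word c (butlast v) * nc_monom [last v])"
  by (simp add: nc_S_word_def S_word_def Abs_nc_ncone Abs_nc_ncmult nc_sigma_word_def nc_monom_def)

lemma length_raising_nc_S_word: "length_raising (nc_S_word c)"
  unfolding length_raising_def
proof
  fix v :: word
  show "nc_order_ge (length v) (nc_S_word c v)"
  proof (cases "v = []")
    case False
    have "nc_order_ge (length (butlast v) + length [last v])
        (nc_sigma_word c (butlast v) * nc_monom [last v])"
      by (intro nc_order_ge_mult nc_order_ge_monom
          length_raising_nc_sigma_word[unfolded length_raising_def, rule_format])
    moreover have "length (butlast v) + length [last v] = length v"
      using False by simp
    ultimately show ?thesis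
      using False by (simp add: nc_S_word_eq)
  qed (simp add: nc_order_ge_0)
qed

lemma additive_nc_S: "additive (nc_S c)"
  unfolding nc_S_def by (rule additive_lin_ext)

lemma nc_S_const_mult: "nc_S c (nc_const d * a) = nc_const d * nc_S c a"
  by (simp add: nc_S_def lin_ext_const_mult)

lemma nc_S_mult_letter: "nc_S c (p * nc_monom [l]) = nc_sigma c p * nc_monom [l]"
proof -
  have "lin_ext (nc_S_word c) (p * nc_monom [l])
      = lin_ext (nc_sigma_word c) p * lin_ext nc_monom (nc_monom [l])
        + lin_ext (\<lambda>v. 0) p * lin_ext (\<lambda>v. 0) (nc_monom [l])"
  proof (rule lin_ext_mult)
    fix a b
    assume "Rep_nc (nc_monom [l]) b \<noteq> 0"
    then have "b = [l]"
      by (auto simp: nc_monom_def ncmon_def split: if_splits)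
    then show "nc_S_word c (a @ b) = nc_sigma_word c a * nc_monom b + 0 * 0"
      by (simp add: nc_S_word_eq)
  qed (simp_all add: length_raising_nc_S_word length_raising_nc_sigma_word length_raising_monom
      length_raising_zero)
  then show ?thesis
    by (simp add: nc_S_def nc_sigma_def lin_ext_monom_self lin_ext_zero_fun)
qed

lemma nc_S_inverse: "nc_S c (nc_S (- c) a) = a"
proof -
  have S_one: "nc_S c 1 = 1"
    using lin_ext_monom[OF length_raising_nc_S_word, of c "[]"]
    by (simp add: nc_S_def nc_monom_Nil nc_S_word_eq)
  have word: "nc_S c (nc_S_word (- c) v) = nc_monom v" for v
  proof (cases "v = []")
    case False
    then have "nc_S c (nc_S_word (- c) v) = nc_monom (butlast v) * nc_monom [last v]"
      by (simp add: nc_S_word_eq nc_S_mult_letter nc_sigma_sigma_word_neg)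
    also have "\<dots> = nc_monom v"
      using False by (simp flip: nc_monom_append)
    finally show ?thesis .
  qed (simp add: nc_S_word_eq S_one nc_monom_Nil)
  have "nc_S c (nc_S (- c) a) = lin_ext (\<lambda>v. nc_S c (nc_S_word (- c) v)) a"
    unfolding nc_S_def by (rule lin_ext_lin_ext) (rule length_raising_nc_S_word)+
  then show ?thesis
    by (simp add: word lin_ext_monom_self)
qed

lemma nc_S_neg_inverse: "nc_S (- c) (nc_S c a) = a"
  using nc_S_inverse[of "- c" a] by simp

section \<open>The derivations \<open>\<partial>\<^sub>n\<close>\<close>

definition nc_d_word :: "nat \<Rightarrow> word \<Rightarrow> nc" where
  "nc_d_word n v = Abs_nc (dword n v)"

definition nc_d :: "nat \<Rightarrow> nc \<Rightarrow> nc" where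
  "nc_d n = lin_ext (nc_d_word n)"

lemma Abs_nc_dop: "Abs_nc (dop n f) = nc_d n (Abs_nc f)"
  by (simp add: dop_def nc_d_def lin_ext_def nc_d_word_def)

definition nc_dx :: "nat \<Rightarrow> nc" where
  "nc_dx n = nc_x * (nc_z ^ (n - 1) * nc_y)"

lemma Abs_nc_dletter: "Abs_nc (dletter n a) = (case a of X \<Rightarrow> nc_dx n | Y \<Rightarrow> - nc_dx n)"
  by (cases a) (simp_all add: dletter_def nc_dx_def nc_z_def Abs_nc_ncmult Abs_nc_ncpow
      Abs_nc_ncadd Abs_nc_ncx Abs_nc_ncy Abs_nc_ncneg)

lemma nc_d_word_Nil: "nc_d_word n [] = 0"
  by (rule nc_eqI) (simp add: nc_d_word_def dword_def)

lemma nc_d_word_Cons: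
  "nc_d_word n (a # w) = Abs_nc (dletter n a) * nc_monom w + nc_monom [a] * nc_d_word n w"
proof -
  have expand: "nc_d_word n v = (\<Sum>i<length v. nc_monom (take i v) * (Abs_nc (dletter n (v ! i))
      * nc_monom (drop (Suc i) v)))" for v
    by (rule nc_eqI) (simp add: nc_d_word_def dword_def Rep_nc_sum Rep_nc_mult nc_monom_def)
  show ?thesis
    unfolding expand
    by (simp add: sum.lessThan_Suc_shift nc_monom_Nil sum_distrib_left mult.assoc
        nc_monom_Cons[of a "take _ w"] del: sum.lessThan_Suc)
qed

lemma nc_d_word_append:
  "nc_d_word n (u @ v) = nc_d_word n u * nc_monom v + nc_monom u * nc_d_word n v"
proof (induction u)
  case (Cons a u)
  show ?case
    by (simp add: nc_d_word_Cons Cons.IH nc_monom_append nc_monom_Cons[of a u] algebra_simps)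
qed (simp add: nc_d_word_Nil nc_monom_Nil)

lemma length_raising_nc_d_word: "length_raising (nc_d_word n)"
  unfolding length_raising_def
proof
  fix v
  have letter: "nc_order_ge 1 (Abs_nc (dletter n a))" for a
    using nc_order_ge_mult[OF nc_order_ge_monom[of "[X]"] nc_order_ge_0]
    by (cases a) (simp_all add: Abs_nc_dletter nc_dx_def nc_x_def nc_order_ge_uminus)
  show "nc_order_ge (length v) (nc_d_word n v)"
  proof (induction v)
    case (Cons a v)
    show ?case
      using nc_order_ge_mult[OF letter nc_order_ge_monom[of v]]
        nc_order_ge_mult[OF nc_order_ge_monom[of "[a]"] Cons.IH]
      by (simp add: nc_d_word_Cons nc_order_ge_add)
  qed (simp add: nc_order_ge_0)
qed

lemma derivation_nc_d: "derivation (nc_d n)"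
proof -
  interpret additive "nc_d n"
    unfolding nc_d_def by (rule additive_lin_ext)
  show ?thesis
  proof unfold_locales
    fix a b
    have "lin_ext (nc_d_word n) (a * b)
        = lin_ext (nc_d_word n) a * lin_ext nc_monom b + lin_ext nc_monom a * lin_ext (nc_d_word n) b"
      by (rule lin_ext_mult)
        (simp_all add: length_raising_nc_d_word length_raising_monom nc_d_word_append)
    then show "nc_d n (a * b) = nc_d n a * b + a * nc_d n b"
      by (simp add: nc_d_def lin_ext_monom_self)
  qed
qed

lemma nc_d_monom: "nc_d n (nc_monom v) = nc_d_word n v"
  by (simp add: nc_d_def lin_ext_monom length_raising_nc_d_word)

lemma nc_d_zero: "nc_d n 0 = 0"
  by (rule additive.zero[OF derivation_additive[OF derivation_nc_d]])

lemma nc_d_one: "nc_d n 1 = 0"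
  by (rule derivation.one[OF derivation_nc_d])

lemma nc_d_const_mult: "nc_d n (nc_const c * a) = nc_const c * nc_d n a"
  by (simp add: nc_d_def lin_ext_const_mult)

lemma nc_d_const: "nc_d n (nc_const c) = 0"
  using nc_d_const_mult[of n c 1] by (simp add: nc_d_one)

lemma nc_d_x: "nc_d n nc_x = nc_dx n"
  by (simp add: nc_x_def nc_d_monom nc_d_word_Cons nc_d_word_Nil nc_monom_Nil Abs_nc_dletter)

lemma nc_d_y: "nc_d n nc_y = - nc_dx n"
  by (simp add: nc_y_def nc_d_monom nc_d_word_Cons nc_d_word_Nil nc_monom_Nil Abs_nc_dletter)

lemma nc_d_z: "nc_d n nc_z = 0"
  by (simp add: nc_z_def additive.add[OF derivation_additive[OF derivation_nc_d]] nc_d_x nc_d_y)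

lemma nc_d_z_power: "nc_d n (nc_z ^ k) = 0"
  by (induction k) (simp_all add: nc_d_one derivation.leibniz[OF derivation_nc_d] nc_d_z)

lemma nc_d_nc_dx: "nc_d n (nc_dx m) = nc_d m (nc_dx n)"
proof -
  interpret dn: derivation "nc_d k" for k
    by (rule derivation_nc_d)
  have x: "nc_x = nc_z - nc_y"
    by (simp add: nc_z_def)
  have zz: "nc_z ^ a * nc_z * nc_z ^ b = nc_z ^ (a + b + 1)" for a b
    by (simp add: power_add mult.assoc power_commutes)
  have expand: "nc_d k (nc_dx l) = nc_x * nc_z ^ (k - 1) * nc_y * nc_z ^ (l - 1) * nc_y
      + nc_x * nc_z ^ (l - 1) * nc_y * nc_z ^ (k - 1) * nc_y
      - nc_x * nc_z ^ ((l - 1) + (k - 1) + 1) * nc_y" for k l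
  proof -
    have "nc_x * nc_z ^ (l - 1) * nc_dx k
        = nc_x * nc_z ^ (l - 1) * ((nc_z - nc_y) * nc_z ^ (k - 1) * nc_y)"
      by (simp add: nc_dx_def mult.assoc flip: x)
    also have "\<dots> = nc_x * (nc_z ^ (l - 1) * nc_z * nc_z ^ (k - 1)) * nc_y
        - nc_x * nc_z ^ (l - 1) * nc_y * nc_z ^ (k - 1) * nc_y"
      by (simp add: algebra_simps)
    finally have "nc_x * nc_z ^ (l - 1) * nc_dx k = nc_x * nc_z ^ ((l - 1) + (k - 1) + 1) * nc_y
        - nc_x * nc_z ^ (l - 1) * nc_y * nc_z ^ (k - 1) * nc_y"
      by (simp only: zz)
    moreover have "nc_d k (nc_dx l) = nc_dx k * nc_z ^ (l - 1) * nc_y - nc_x * nc_z ^ (l - 1) * nc_dx k"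
      by (simp add: nc_dx_def dn.leibniz nc_d_x nc_d_y nc_d_z_power algebra_simps)
    ultimately show ?thesis
      by (simp add: nc_dx_def mult.assoc)
  qed
  show ?thesis
    unfolding expand by (simp add: ac_simps)
qed

lemma nc_d_commute: "nc_d n (nc_d m a) = nc_d m (nc_d n a)"
proof -
  interpret dn: derivation "nc_d k" for k
    by (rule derivation_nc_d)
  have letter: "nc_d n (nc_d m (nc_monom [l])) = nc_d m (nc_d n (nc_monom [l]))" for l
    using nc_d_nc_dx[of n m]
    by (cases l) (simp_all add: nc_x_def[symmetric] nc_y_def[symmetric] nc_d_x nc_d_y dn.minus)
  have monom: "nc_d n (nc_d m (nc_monom v)) = nc_d m (nc_d n (nc_monom v))" for v
  proof (induction v)
    case (Cons l v)
    show ?case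
      by (simp add: nc_monom_Cons[of l v] dn.leibniz dn.add letter Cons.IH algebra_simps)
  qed (simp add: nc_monom_Nil dn.one dn.zero)
  have "nc_d n (nc_d m a) = lin_ext (\<lambda>v. nc_d n (nc_d_word m v)) a"
    unfolding nc_d_def by (rule lin_ext_lin_ext) (rule length_raising_nc_d_word)+
  also have "\<dots> = lin_ext (\<lambda>v. nc_d m (nc_d_word n v)) a"
    using monom by (simp add: nc_d_monom)
  also have "\<dots> = nc_d m (nc_d n a)"
    unfolding nc_d_def by (rule lin_ext_lin_ext[symmetric]) (rule length_raising_nc_d_word)+
  finally show ?thesis .
qed

section \<open>The operator \<open>\<Delta>\<close> on series in \<open>v\<close>\<close>

definition nc_rat :: "rat \<Rightarrow> nc" where
  "nc_rat q = nc_const [:q:]"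

lemma central_nc_const: "central (nc_const c)"
  by (simp add: central_def nc_const_commute)

lemma central_nc_rat: "central (nc_rat q)"
  by (simp add: nc_rat_def central_nc_const)

lemma nc_rat_mult: "nc_rat (p * q) = nc_rat p * nc_rat q"
  by (simp add: nc_rat_def flip: nc_const_mult) (simp add: mult.commute)

lemma nc_rat_one: "nc_rat 1 = 1"
  by (simp add: nc_rat_def nc_const_one flip: one_pCons)

lemma nc_rat_of_nat: "nc_rat (of_nat n) = of_nat n"
  by (simp add: nc_rat_def nc_const_of_nat flip: of_nat_poly)

lemma nc_rat_fact_Suc: "nc_rat (1 / fact (Suc k)) * of_nat (Suc k) = nc_rat (1 / fact k)"
  by (simp add: nc_rat_of_nat[symmetric] nc_rat_mult[symmetric] del: of_nat_Suc)

lemma nc_rat_fact_binomial: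
  assumes "a \<le> k"
  shows "nc_rat (1 / fact k) * of_nat (k choose a) = nc_rat (1 / fact a) * nc_rat (1 / fact (k - a))"
proof -
  have "(1 / fact k) * (of_nat (k choose a) :: rat) = (1 / fact a) * (1 / fact (k - a))"
    using assms by (simp add: binomial_fact field_simps)
  then show ?thesis
    by (simp only: nc_rat_of_nat[symmetric] nc_rat_mult[symmetric])
qed

text \<open>\<open>gen_Delta\<close> is the generator \<open>D = \<Sum>\<^sub>n \<partial>\<^sub>n v\<^sup>n / n\<close> of \<open>\<Delta>\<^sub>v\<close>, and \<open>gen_Delta_euler\<close>
  \<open>= \<Sum>\<^sub>n \<partial>\<^sub>n v\<^sup>n\<close> is its commutator with the Euler operator \<open>v d/dv\<close>.\<close>
definition gen_Delta :: "nc fps \<Rightarrow> nc fps" where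
  "gen_Delta = series_der (\<lambda>n a. nc_rat (1 / of_nat n) * nc_d n a)"

definition gen_Delta_euler :: "nc fps \<Rightarrow> nc fps" where
  "gen_Delta_euler = series_der nc_d"

lemma derivation_gen_Delta: "derivation gen_Delta"
  unfolding gen_Delta_def
  by (rule derivation_series_der, rule derivation_central_mult[OF derivation_nc_d central_nc_rat])

lemma gen_Delta_raises_order: "fps_order_ge m \<phi> \<Longrightarrow> fps_order_ge (Suc m) (gen_Delta \<phi>)"
  unfolding gen_Delta_def
  by (rule fps_order_ge_series_der) (simp add: nc_d_zero)

lemma fps_euler_gen_Delta: "fps_euler (gen_Delta \<phi>) = gen_Delta (fps_euler \<phi>) + gen_Delta_euler \<phi>"
proof -
  have "additive (\<lambda>a. nc_rat (1 / of_nat n) * nc_d n a)" for n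
    using derivation_additive[OF derivation_central_mult[OF derivation_nc_d central_nc_rat]] .
  moreover have "series_der (\<lambda>n a. of_nat n * (nc_rat (1 / of_nat n) * nc_d n a)) = series_der nc_d"
    by (rule series_der_cong) (simp add: mult.assoc[symmetric] nc_rat_mult[symmetric]
        nc_rat_of_nat[symmetric] nc_rat_one)
  ultimately show ?thesis
    by (simp add: gen_Delta_def gen_Delta_euler_def fps_euler_series_der)
qed

lemma gen_Delta_euler_gen_Delta: "gen_Delta_euler (gen_Delta \<phi>) = gen_Delta (gen_Delta_euler \<phi>)"
  unfolding gen_Delta_def gen_Delta_euler_def
proof (rule series_der_commute)
  show "additive (nc_d n)" "additive (\<lambda>a. nc_rat (1 / of_nat n) * nc_d n a)" for n
    using derivation_nc_d derivation_central_mult[OF derivation_nc_d central_nc_rat]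
    by (simp_all add: derivation_additive)
  show "nc_d n (nc_rat (1 / of_nat m) * nc_d m a) = nc_rat (1 / of_nat m) * nc_d m (nc_d n a)" for n m a
    by (simp add: nc_rat_def nc_d_const_mult nc_d_commute)
qed

lemma gen_Delta_euler_nth_0: "gen_Delta_euler \<phi> $ 0 = 0"
  by (simp add: gen_Delta_euler_def series_der_nth)

definition exp_der :: "(nc fps \<Rightarrow> nc fps) \<Rightarrow> nc fps \<Rightarrow> nc fps" where
  "exp_der D \<phi> = Abs_fps (\<lambda>j. \<Sum>k\<le>j. nc_rat (1 / fact k) * (D ^^ k) \<phi> $ j)"

lemma exp_der_nth: "exp_der D \<phi> $ j = (\<Sum>k\<le>j. nc_rat (1 / fact k) * (D ^^ k) \<phi> $ j)"
  by (simp add: exp_der_def)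

definition exp_der_trunc :: "(nc fps \<Rightarrow> nc fps) \<Rightarrow> nat \<Rightarrow> nc fps \<Rightarrow> nc fps" where
  "exp_der_trunc D N \<phi> = (\<Sum>k\<le>N. fps_const (nc_rat (1 / fact k)) * (D ^^ k) \<phi>)"

locale order_raising_derivation = derivation D for D :: "nc fps \<Rightarrow> nc fps" +
  assumes raises_order: "fps_order_ge m \<phi> \<Longrightarrow> fps_order_ge (Suc m) (D \<phi>)"
begin

lemma funpow_raises_order: "fps_order_ge m \<phi> \<Longrightarrow> fps_order_ge (m + k) ((D ^^ k) \<phi>)"
  by (induction k) (simp_all add: raises_order)

lemma funpow_nth_eq_0: "j < k \<Longrightarrow> (D ^^ k) \<phi> $ j = 0"
  using funpow_raises_order[OF fps_order_ge_0, where \<phi> = \<phi> and k = k] by (simp add: fps_order_ge_def)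

lemma exp_eq_trunc:
  assumes "j \<le> N"
  shows "exp_der D \<phi> $ j = exp_der_trunc D N \<phi> $ j"
proof -
  have "exp_der_trunc D N \<phi> $ j = (\<Sum>k\<le>N. nc_rat (1 / fact k) * (D ^^ k) \<phi> $ j)"
    by (simp add: exp_der_trunc_def fps_sum_nth)
  also have "\<dots> = (\<Sum>k\<le>j. nc_rat (1 / fact k) * (D ^^ k) \<phi> $ j)"
    using assms by (intro sum.mono_neutral_right) (auto simp: funpow_nth_eq_0)
  finally show ?thesis
    by (simp add: exp_der_nth)
qed

lemma additive_exp: "additive (exp_der D)"
  by unfold_locales (simp add: fps_eq_iff exp_der_nth additive.add[OF funpow_additive]
      distrib_left sum.distrib)

lemma exp_fixed:
  assumes "D \<phi> = 0"
  shows "exp_der D \<phi> = \<phi>"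
proof -
  have "D ((D ^^ k) \<phi>) = 0" for k
    by (induction k) (simp_all add: assms zero)
  then show ?thesis
    by (simp add: fps_eq_iff exp_der_nth sum.atMost_shift nc_rat_one)
qed

lemma exp_trunc_mult_nth:
  "exp_der_trunc D N (\<phi> * \<psi>) $ N = (exp_der_trunc D N \<phi> * exp_der_trunc D N \<psi>) $ N"
proof -
  define c where "c k = fps_const (nc_rat (1 / fact k))" for k
  define G where "G a b = c a * c b * ((D ^^ a) \<phi> * (D ^^ b) \<psi>)" for a b
  have "exp_der_trunc D N (\<phi> * \<psi>) = (\<Sum>k\<le>N. \<Sum>a\<le>k. G a (k - a))"
    unfolding exp_der_trunc_def
  proof (intro sum.cong refl)
    fix k
    have "c k * of_nat (k choose a) = c a * c (k - a)" if "a \<le> k" for a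
      using nc_rat_fact_binomial[OF that] by (simp add: c_def flip: fps_of_nat)
    then show "fps_const (nc_rat (1 / fact k)) * (D ^^ k) (\<phi> * \<psi>) = (\<Sum>a\<le>k. G a (k - a))"
      by (simp add: funpow_leibniz sum_distrib_left G_def mult.assoc[symmetric] flip: c_def)
  qed
  also have "\<dots> = (\<Sum>(a, b)\<in>{(a, b). a + b \<le> N}. G a b)"
    by (rule sum.triangle_reindex_eq[symmetric])
  finally have lhs: "exp_der_trunc D N (\<phi> * \<psi>) = (\<Sum>(a, b)\<in>{(a, b). a + b \<le> N}. G a b)" .
  have "c a * (D ^^ a) \<phi> * (c b * (D ^^ b) \<psi>) = G a b" for a b
  proof -
    have "(D ^^ a) \<phi> * c b = c b * (D ^^ a) \<phi>"
      by (simp add: c_def centralD[OF central_fps_const[OF central_nc_rat]])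
    then show ?thesis
      by (simp add: G_def mult.assoc) (simp add: mult.assoc[symmetric])
  qed
  then have rhs: "exp_der_trunc D N \<phi> * exp_der_trunc D N \<psi> = (\<Sum>(a, b)\<in>{..N} \<times> {..N}. G a b)"
    by (simp add: exp_der_trunc_def sum_product sum.cartesian_product flip: c_def)
  have "G a b $ N = 0" if "N < a + b" for a b
  proof -
    have "fps_order_ge (a + b) ((D ^^ a) \<phi> * (D ^^ b) \<psi>)"
      using fps_order_ge_mult[OF funpow_raises_order[OF fps_order_ge_0] funpow_raises_order[OF fps_order_ge_0]]
      by simp
    then show ?thesis
      using that by (simp add: G_def c_def fps_order_ge_def mult.assoc)
  qed
  then show ?thesis
    unfolding lhs rhs fps_sum_nth
    by (intro sum.mono_neutral_left) (auto simp: not_le, meson not_le)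
qed

lemma exp_mult: "exp_der D (\<phi> * \<psi>) = exp_der D \<phi> * exp_der D \<psi>"
proof (rule fps_ext)
  fix N
  have "exp_der D (\<phi> * \<psi>) $ N = (exp_der_trunc D N \<phi> * exp_der_trunc D N \<psi>) $ N"
    using exp_eq_trunc[where j = N and N = N and \<phi> = "\<phi> * \<psi>"] exp_trunc_mult_nth by simp
  also have "\<dots> = (exp_der D \<phi> * exp_der D \<psi>) $ N"
    by (rule trans[OF fps_mult_nth_cong_left fps_mult_nth_cong_right])
      (simp_all add: exp_eq_trunc[symmetric])
  finally show "exp_der D (\<phi> * \<psi>) $ N = (exp_der D \<phi> * exp_der D \<psi>) $ N" .
qed

lemma ring_homomorphism_exp: "ring_homomorphism (exp_der D)"
  using additive_exp by (simp add: ring_homomorphism_def ring_homomorphism_axioms_def exp_mult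
      exp_fixed one)

end

lemma (in order_raising_derivation) fps_euler_exp:
  assumes euler: "\<And>\<psi>. fps_euler (D \<psi>) = D (fps_euler \<psi>) + D' \<psi>"
    and commute: "\<And>\<psi>. D' (D \<psi>) = D (D' \<psi>)"
    and D'_nth_0: "\<And>\<psi>. D' \<psi> $ 0 = 0"
    and "fps_euler \<phi> = 0"
  shows "fps_euler (exp_der D \<phi>) = exp_der D (D' \<phi>)"
proof (rule fps_ext)
  fix j
  have funpow_commute: "D' ((D ^^ k) \<psi>) = (D ^^ k) (D' \<psi>)" for k \<psi>
    by (induction k) (simp_all add: commute)
  have euler_funpow: "fps_euler ((D ^^ Suc k) \<phi>) = of_nat (Suc k) * (D ^^ k) (D' \<phi>)" for k
  proof (induction k)
    case 0
    show ?case
      using euler[of \<phi>] assms(4) by (simp add: zero)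
  next
    case (Suc k)
    have "fps_euler ((D ^^ Suc (Suc k)) \<phi>) = D (fps_euler ((D ^^ Suc k) \<phi>)) + D' ((D ^^ Suc k) \<phi>)"
      using euler[of "(D ^^ Suc k) \<phi>"] by simp
    also have "\<dots> = of_nat (Suc k) * (D ^^ Suc k) (D' \<phi>) + (D ^^ Suc k) (D' \<phi>)"
      by (simp only: Suc.IH additive_of_nat_mult[OF additive_axioms] funpow_commute) simp
    finally show ?case
      by (simp add: distrib_right)
  qed
  have last_vanishes: "(D ^^ j) (D' \<phi>) $ j = 0"
    using funpow_raises_order[of 1 "D' \<phi>" j] D'_nth_0 by (simp add: fps_order_ge_def)
  have "of_nat j * (c * a) = c * (of_nat j * a)" for c a :: nc
    by (simp add: mult.assoc[symmetric] mult_of_nat_commute[of j c])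
  then have "fps_euler (exp_der D \<phi>) $ j
      = (\<Sum>k\<le>j. nc_rat (1 / fact k) * fps_euler ((D ^^ k) \<phi>) $ j)"
    by (simp add: exp_der_nth fps_euler_nth sum_distrib_left)
  also have "\<dots> = (\<Sum>k<j. nc_rat (1 / fact (Suc k)) * fps_euler ((D ^^ Suc k) \<phi>) $ j)"
    by (simp add: sum.atMost_shift assms(4) del: funpow.simps)
  also have "\<dots> = (\<Sum>k<j. nc_rat (1 / fact k) * (D ^^ k) (D' \<phi>) $ j)"
    by (simp only: euler_funpow fps_of_nat[symmetric] fps_mult_left_const_nth mult.assoc[symmetric]
        nc_rat_fact_Suc)
  also have "\<dots> = exp_der D (D' \<phi>) $ j"
    by (simp add: exp_der_nth lessThan_Suc_atMost[symmetric] last_vanishes)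
  finally show "fps_euler (exp_der D \<phi>) $ j = exp_der D (D' \<phi>) $ j" .
qed

lemma fps_euler_eq_unique:
  fixes \<Psi> \<Phi> :: "nc fps"
  assumes "\<Psi> $ 0 = \<Phi> $ 0"
    and "fps_euler \<Psi> = fps_X * F \<Psi>" "fps_euler \<Phi> = fps_X * F \<Phi>"
    and causal: "\<And>A B i. (\<And>k. k \<le> i \<Longrightarrow> A $ k = B $ k) \<Longrightarrow> F A $ i = F B $ i"
  shows "\<Psi> = \<Phi>"
proof (rule fps_ext)
  fix j
  show "\<Psi> $ j = \<Phi> $ j"
  proof (induction j rule: less_induct)
    case (less j)
    show ?case
    proof (cases j)
      case (Suc i)
      have "of_nat j * \<Psi> $ j = F \<Psi> $ i"
        using arg_cong[OF assms(2), of "\<lambda>A. A $ j"] by (simp add: fps_euler_nth Suc)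
      also have "\<dots> = F \<Phi> $ i"
        using less Suc by (intro causal) simp
      also have "\<dots> = of_nat j * \<Phi> $ j"
        using arg_cong[OF assms(3), of "\<lambda>A. A $ j"] by (simp add: fps_euler_nth Suc)
      finally show ?thesis
        using Suc nc_of_nat_mult_cancel by blast
    qed (use assms(1) in simp)
  qed
qed

definition Delta_v :: "nc fps \<Rightarrow> nc fps" where
  "Delta_v = exp_der gen_Delta"

interpretation gen_Delta: order_raising_derivation gen_Delta
  by (intro order_raising_derivation.intro order_raising_derivation_axioms.intro
      derivation_gen_Delta gen_Delta_raises_order)

lemma ring_homomorphism_Delta_v: "ring_homomorphism Delta_v"
  unfolding Delta_v_def by (rule gen_Delta.ring_homomorphism_exp)

lemma Delta_v_fixed: "gen_Delta \<phi> = 0 \<Longrightarrow> Delta_v \<phi> = \<phi>"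
  unfolding Delta_v_def by (rule gen_Delta.exp_fixed)

lemma gen_Delta_const: "(\<And>n. nc_d n a = 0) \<Longrightarrow> gen_Delta (fps_const a) = 0"
  by (auto simp: fps_eq_iff gen_Delta_def series_der_nth nc_d_zero intro!: sum.neutral)

lemma Delta_v_X: "Delta_v fps_X = fps_X"
  by (rule Delta_v_fixed)
    (auto simp: fps_eq_iff gen_Delta_def series_der_nth fps_X_def nc_d_zero nc_d_one intro!: sum.neutral)

lemma Delta_v_z: "Delta_v (fps_const nc_z) = fps_const nc_z"
  by (intro Delta_v_fixed gen_Delta_const nc_d_z)

lemma Delta_v_geom_z: "Delta_v (fps_geom nc_z) = fps_geom nc_z"
  by (rule Delta_v_fixed) (simp add: fps_eq_iff gen_Delta_def series_der_nth fps_geom_nth nc_d_z_power)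

lemma fps_euler_Delta_v:
  "fps_euler \<phi> = 0 \<Longrightarrow> fps_euler (Delta_v \<phi>) = Delta_v (gen_Delta_euler \<phi>)"
  unfolding Delta_v_def
  by (rule gen_Delta.fps_euler_exp) (simp_all add: fps_euler_gen_Delta gen_Delta_euler_gen_Delta gen_Delta_euler_nth_0)

lemma gen_Delta_euler_x: "gen_Delta_euler (fps_const nc_x) = fps_X * (fps_const nc_x * (fps_geom nc_z * fps_const nc_y))"
proof (rule fps_ext)
  fix j
  have "gen_Delta_euler (fps_const nc_x) $ j = (\<Sum>n\<in>{1..j}. if n = j then nc_d n nc_x else 0)"
    unfolding gen_Delta_euler_def series_der_nth
    by (intro sum.cong refl) (auto simp: nc_d_zero)
  then show "gen_Delta_euler (fps_const nc_x) $ j = (fps_X * (fps_const nc_x * (fps_geom nc_z * fps_const nc_y))) $ j"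
    by (cases j) (simp_all add: nc_d_x nc_dx_def fps_geom_nth)
qed

lemma Delta_v_y_eq: "Delta_v (fps_const nc_y) = fps_const nc_z - Delta_v (fps_const nc_x)"
proof -
  have "fps_const nc_y = fps_const nc_z - fps_const nc_x"
    by (simp add: nc_z_def)
  then show ?thesis
    by (simp only: additive.diff[OF ring_homomorphism.axioms(1)[OF ring_homomorphism_Delta_v]]
        Delta_v_z)
qed

lemma Delta_v_x: "Delta_v (fps_const nc_x) = fps_const nc_x * fps_geom nc_y"
proof (rule fps_euler_eq_unique)
  define F where "F \<Psi> = \<Psi> * (fps_geom nc_z * (fps_const nc_z - \<Psi>))" for \<Psi> :: "nc fps"
  show "\<And>A B i. (\<And>k. k \<le> i \<Longrightarrow> A $ k = B $ k) \<Longrightarrow> F A $ i = F B $ i"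
    unfolding F_def
    by (rule trans[OF fps_mult_nth_cong_left fps_mult_nth_cong_right],
        assumption, rule fps_mult_nth_cong_right, simp)
  show "Delta_v (fps_const nc_x) $ 0 = (fps_const nc_x * fps_geom nc_y) $ 0"
    by (simp add: Delta_v_def exp_der_nth nc_rat_one fps_geom_nth)
  show "fps_euler (Delta_v (fps_const nc_x)) = fps_X * F (Delta_v (fps_const nc_x))"
    by (simp add: fps_euler_Delta_v fps_euler_const gen_Delta_euler_x Delta_v_y_eq Delta_v_X
        Delta_v_geom_z F_def ring_homomorphism.mult[OF ring_homomorphism_Delta_v])
  have "fps_geom nc_z * (fps_const nc_z - fps_const nc_x * fps_geom nc_y) = fps_const nc_y * fps_geom nc_y"
  proof -
    have "fps_const nc_z - fps_const nc_x * fps_geom nc_y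
        = fps_const nc_z * ((1 - fps_X * fps_const nc_y) * fps_geom nc_y) - fps_const nc_x * fps_geom nc_y"
      by (simp only: fps_geom_inverse_left mult_1_right)
    also have "\<dots> = (fps_const nc_z * (1 - fps_X * fps_const nc_y) - fps_const nc_x) * fps_geom nc_y"
      by (simp only: left_diff_distrib mult.assoc)
    also have "fps_const nc_z * (1 - fps_X * fps_const nc_y) - fps_const nc_x
        = (1 - fps_X * fps_const nc_z) * fps_const nc_y"
      by (simp add: nc_z_def algebra_simps fps_mult_fps_X_commute)
    finally show ?thesis
      by (simp add: mult.assoc[symmetric] fps_geom_inverse_right)
  qed
  then show "fps_euler (fps_const nc_x * fps_geom nc_y) = fps_X * F (fps_const nc_x * fps_geom nc_y)"
    by (simp add: F_def fps_euler_const_mult fps_euler_geom mult.assoc fps_mult_fps_X_commute)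
qed

lemma Delta_v_y: "Delta_v (fps_const nc_y) = fps_const nc_z - fps_const nc_x * fps_geom nc_y"
  by (simp add: Delta_v_y_eq Delta_v_x)

section \<open>Series in \<open>u\<close> and \<open>v\<close>\<close>

text \<open>A series \<open>F :: ser\<close> becomes an element of \<open>h[[v]][[u]]\<close>: the outer variable is \<open>u\<close>.\<close>
definition ser_to_fps2 :: "ser \<Rightarrow> nc fps fps" where
  "ser_to_fps2 F = Abs_fps (\<lambda>i. Abs_fps (\<lambda>j. Abs_nc (F i j)))"

lemma ser_to_fps2_nth [simp]: "ser_to_fps2 F $ i $ j = Abs_nc (F i j)"
  by (simp add: ser_to_fps2_def)

lemma ser_to_fps2_inject: "ser_to_fps2 F = ser_to_fps2 G \<Longrightarrow> F = G"
  by (metis Abs_nc_inject UNIV_I ext ser_to_fps2_nth)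

lemma ser_to_fps2_smul: "ser_to_fps2 (smul F G) = ser_to_fps2 F * ser_to_fps2 G"
  by (intro fps_ext nc_eqI)
    (simp add: fps2_mult_nth smul_def Rep_nc_sum Rep_nc_mult atLeast0AtMost)

lemma ser_to_fps2_sadd: "ser_to_fps2 (sadd F G) = ser_to_fps2 F + ser_to_fps2 G"
  by (intro fps_ext) (simp add: sadd_def)

lemma ser_to_fps2_ssub: "ser_to_fps2 (ssub F G) = ser_to_fps2 F - ser_to_fps2 G"
  by (intro fps_ext) (simp add: ssub_def)

lemma ser_to_fps2_sterm:
  "ser_to_fps2 (sterm a b f) = fps_X ^ a * (fps2_v ^ b * fps2_const (Abs_nc f))"
  by (intro fps_ext) (simp add: sterm_def fps_X_power_mult_nth fps_const_power)

lemma ser_to_fps2_spow: "ser_to_fps2 (spow F n) = ser_to_fps2 F ^ n"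
  by (induction n) (simp_all add: ser_to_fps2_sterm ser_to_fps2_smul)

lemma ser_to_fps2_sgeom: "ser_to_fps2 (sgeom F) = fps2_geom (ser_to_fps2 F)"
  by (intro fps_ext nc_eqI)
    (simp add: fps2_geom_nth sgeom_def Rep_nc_sum flip: ser_to_fps2_spow)

definition S_conj :: "(nc fps \<Rightarrow> nc fps) \<Rightarrow> nc fps \<Rightarrow> nc fps" where
  "S_conj D \<phi> = fps_map (nc_S (- tvar)) (D (fps_map (nc_S tvar) \<phi>))"

lemma Abs_nc_smult_sum: "Abs_nc (\<lambda>w. \<Sum>n\<in>A. smult (q n) (g n w)) = (\<Sum>n\<in>A. nc_rat (q n) * Abs_nc (g n))"
  by (rule nc_eqI) (simp add: Rep_nc_sum nc_rat_def Rep_nc_const_mult)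

lemma nc_S_sum_rat:
  "nc_S c (\<Sum>n\<in>A. nc_rat (q n) * a n) = (\<Sum>n\<in>A. nc_rat (q n) * nc_S c (a n))"
  by (simp add: additive.sum[OF additive_nc_S] nc_rat_def nc_S_const_mult)

lemma ser_to_fps2_Dv: "ser_to_fps2 (Dv F) = fps_map (S_conj gen_Delta) (ser_to_fps2 F)"
  by (intro fps_ext)
    (simp add: Dv_def dtop_def Abs_nc_smult_sum Abs_nc_Sop Abs_nc_dop S_conj_def gen_Delta_def
      series_der_nth nc_S_sum_rat)

lemma ser_to_fps2_Dv_funpow: "ser_to_fps2 ((Dv ^^ k) F) = fps_map (S_conj (gen_Delta ^^ k)) (ser_to_fps2 F)"
proof (induction k)
  case 0
  show ?case
    by (intro fps_ext) (simp add: S_conj_def nc_S_neg_inverse)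
next
  case (Suc k)
  have "fps_map (nc_S tvar) (fps_map (nc_S (- tvar)) \<psi>) = \<psi>" for \<psi>
    by (simp add: fps_eq_iff nc_S_inverse)
  then show ?case
    by (intro fps_ext) (simp add: ser_to_fps2_Dv Suc.IH S_conj_def)
qed

lemma ser_to_fps2_Delta: "ser_to_fps2 (Delta F) = fps_map (S_conj Delta_v) (ser_to_fps2 F)"
proof (intro fps_ext)
  fix i j
  have "Abs_nc (Delta F i j) = (\<Sum>k\<le>j. nc_rat (1 / fact k) * Abs_nc ((Dv ^^ k) F i j))"
    by (simp add: Delta_def Abs_nc_smult_sum)
  also have "\<dots> = (\<Sum>k\<le>j. nc_rat (1 / fact k) * S_conj (gen_Delta ^^ k) (ser_to_fps2 F $ i) $ j)"
    by (simp flip: ser_to_fps2_nth add: ser_to_fps2_Dv_funpow)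
  also have "\<dots> = S_conj Delta_v (ser_to_fps2 F $ i) $ j"
    by (simp add: S_conj_def Delta_v_def exp_der_nth nc_S_sum_rat)
  finally show "ser_to_fps2 (Delta F) $ i $ j = fps_map (S_conj Delta_v) (ser_to_fps2 F) $ i $ j"
    by simp
qed

lemma ser_to_fps2_lhs:
  "ser_to_fps2 (smul (sgeom (ssub (sadd (sterm 1 0 ncx) (sterm 0 1 ncx))
                        (sterm 1 1 (ncmult ncx (ncadd (ncsmult (1 - tvar) ncx) ncy)))))
       (smul (sterm 0 0 ncx) (smul (sgeom (sterm 0 1 (ncsmult tvar ncx))) (sterm 0 0 ncy))))
   = fps2_geom (fps_X * fps2_const nc_x + fps2_v * fps2_const nc_x
        - fps_X * (fps2_v * fps2_const (nc_x * (nc_const (1 - tvar) * nc_x + nc_y))))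
     * (fps2_const nc_x * (fps2_geom (fps2_v * fps2_const (nc_const tvar * nc_x)) * fps2_const nc_y))"
  by (simp only: ser_to_fps2_smul ser_to_fps2_sgeom ser_to_fps2_ssub ser_to_fps2_sadd ser_to_fps2_sterm
      Abs_nc_ncmult Abs_nc_ncadd Abs_nc_ncsmult Abs_nc_ncx Abs_nc_ncy power_0 power_one_right mult_1_left)

lemma ser_to_fps2_rhs:
  "ser_to_fps2 (smul (smul (sterm 0 0 ncx) (sgeom (sterm 1 0 ncx))) (smul (sterm 0 0 ncy) (sgeom (sterm 0 1 ncy))))
   = fps2_const nc_x * fps2_geom (fps_X * fps2_const nc_x) * (fps2_const nc_y * fps2_geom (fps2_v * fps2_const nc_y))"
  by (simp only: ser_to_fps2_smul ser_to_fps2_sgeom ser_to_fps2_sterm Abs_nc_ncx Abs_nc_ncy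
      power_0 power_one_right mult_1_left)

abbreviation S2 :: "rat poly \<Rightarrow> nc fps fps \<Rightarrow> nc fps fps" where
  "S2 c \<equiv> fps_map (fps_map (nc_S c))"

abbreviation sigma2 :: "rat poly \<Rightarrow> nc fps fps \<Rightarrow> nc fps fps" where
  "sigma2 c \<equiv> fps_map (fps_map (nc_sigma c))"

abbreviation Delta2 :: "nc fps fps \<Rightarrow> nc fps fps" where
  "Delta2 \<equiv> fps_map Delta_v"

lemma fps_map_S_conj: "fps_map (S_conj D) A = S2 (- tvar) (fps_map D (S2 tvar A))"
  by (simp add: fps_eq_iff S_conj_def)

lemma S2_neg_inverse: "S2 (- c) (S2 c A) = A"
  by (simp add: fps_eq_iff nc_S_neg_inverse)

lemma S2_mult_y: "S2 c (M * fps2_const nc_y) = sigma2 c M * fps2_const nc_y"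
  by (intro fps_ext) (simp add: nc_y_def nc_S_mult_letter)

lemma ring_homomorphism_sigma2: "ring_homomorphism (sigma2 c)"
  by (intro ring_homomorphism_fps_map ring_homomorphism_nc_sigma)

lemma ring_homomorphism_Delta2: "ring_homomorphism Delta2"
  by (intro ring_homomorphism_fps_map ring_homomorphism_Delta_v)

lemma sigma2_images:
  "sigma2 c fps_X = fps_X"
  "sigma2 c fps2_v = fps2_v"
  "sigma2 c (fps2_const nc_x) = fps2_const nc_x"
  "sigma2 c (fps2_const nc_y) = fps2_const (nc_const c) * fps2_const nc_x + fps2_const nc_y"
  "sigma2 c (fps2_const (nc_const d)) = fps2_const (nc_const d)"
  "sigma2 c (fps2_const (nc_x * (nc_const (1 - c) * nc_x + nc_y))) = fps2_const nc_x * fps2_const nc_z"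
proof -
  interpret ring_homomorphism "nc_sigma c"
    by (rule ring_homomorphism_nc_sigma)
  have "nc_sigma c (nc_x * (nc_const (1 - c) * nc_x + nc_y))
      = nc_x * ((nc_const (1 - c) + nc_const c) * nc_x + nc_y)"
    by (simp add: mult add nc_sigma_const_mult nc_sigma_x nc_sigma_y algebra_simps)
  also have "\<dots> = nc_x * nc_z"
    by (simp add: nc_z_def nc_const_one flip: nc_const_add)
  finally show "sigma2 c fps_X = fps_X" "sigma2 c fps2_v = fps2_v"
    "sigma2 c (fps2_const nc_x) = fps2_const nc_x"
    "sigma2 c (fps2_const nc_y) = fps2_const (nc_const c) * fps2_const nc_x + fps2_const nc_y"
    "sigma2 c (fps2_const (nc_const d)) = fps2_const (nc_const d)"
    "sigma2 c (fps2_const (nc_x * (nc_const (1 - c) * nc_x + nc_y))) = fps2_const nc_x * fps2_const nc_z"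
    by (simp_all add: fps_map_map_X fps_map_map_const_X fps_map_map_const zero one
        nc_sigma_x nc_sigma_y nc_sigma_const)
qed

lemma Delta2_images:
  "Delta2 fps_X = fps_X"
  "Delta2 fps2_v = fps2_v"
  "Delta2 (fps2_const nc_x) = fps2_const nc_x * fps_const (fps_geom nc_y)"
  "Delta2 (fps2_const nc_y) = fps2_const nc_z - fps2_const nc_x * fps_const (fps_geom nc_y)"
  "Delta2 (fps2_const nc_z) = fps2_const nc_z"
  "Delta2 (fps2_const (nc_const c)) = fps2_const (nc_const c)"
proof -
  interpret ring_homomorphism Delta_v
    by (rule ring_homomorphism_Delta_v)
  show "Delta2 fps_X = fps_X" "Delta2 fps2_v = fps2_v"
    "Delta2 (fps2_const nc_x) = fps2_const nc_x * fps_const (fps_geom nc_y)"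
    "Delta2 (fps2_const nc_y) = fps2_const nc_z - fps2_const nc_x * fps_const (fps_geom nc_y)"
    "Delta2 (fps2_const nc_z) = fps2_const nc_z"
    "Delta2 (fps2_const (nc_const c)) = fps2_const (nc_const c)"
    by (simp_all add: fps_map_X fps_map_const zero one Delta_v_X Delta_v_x Delta_v_y Delta_v_z
        Delta_v_fixed gen_Delta_const nc_d_const)
qed

section \<open>An identity between inverses\<close>

context
  fixes x y t u v :: "'a::ring_1"
  assumes central_u: "central u" and central_v: "central v" and central_t: "central t"
begin

lemma inverse_mult_x_eq:
  assumes P: "P * (1 - v * y) = 1" and U: "(1 - u * x) * U = 1" and Z: "(1 - v * (x + y)) * Z = 1"
    and I: "I * (1 - (u * (x * P) + v * (x * P) - u * (v * (x * P * (x + y))))) = 1"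
  shows "I * x = x * (U * (Z * (1 - v * y)))"
proof -
  define M where "M = U * (Z * (1 - v * y))"
  define W where "W = u * (x * P) + v * (x * P) - u * (v * (x * P * (x + y)))"
  note C = central_commute[OF central_u, of x] central_commute[OF central_u, of y]
    central_commute[OF central_u, of P] central_commute[OF central_v, of x]
    central_commute[OF central_v, of y] central_commute[OF central_v, of P]
    central_commute[OF central_v, of u]
  have id: "(1 - v * y) - (1 - v * (x + y)) * (1 - u * x) = u * x + v * x - u * (v * ((x + y) * x))"
    by (simp add: algebra_simps C)
  have Wx: "W * x = x * (P * ((1 - v * y) - (1 - v * (x + y)) * (1 - u * x)))"
    unfolding id W_def by (simp add: algebra_simps C)
  have zm: "(1 - v * (x + y)) * ((1 - u * x) * M) = 1 - v * y"
    unfolding M_def by (simp add: mult.assoc[symmetric] U) (simp add: Z flip: mult.assoc)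
  have "W * x * M = x * (P * (((1 - v * y) - (1 - v * (x + y)) * (1 - u * x)) * M))"
    by (simp add: Wx mult.assoc)
  also have "((1 - v * y) - (1 - v * (x + y)) * (1 - u * x)) * M
      = (1 - v * y) * M - (1 - v * (x + y)) * ((1 - u * x) * M)"
    by (simp add: left_diff_distrib mult.assoc)
  also have "\<dots> = (1 - v * y) * M - (1 - v * y)"
    by (simp only: zm)
  also have "x * (P * ((1 - v * y) * M - (1 - v * y))) = x * M - x"
  proof -
    have "P * ((1 - v * y) * M - (1 - v * y)) = (P * (1 - v * y)) * M - P * (1 - v * y)"
      by (metis mult.assoc right_diff_distrib)
    also have "\<dots> = M - 1"
      by (simp only: P mult_1_left)
    finally show ?thesis
      by (simp only: right_diff_distrib mult_1_right)
  qed
  finally have "(1 - W) * (x * M) = x"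
    by (simp add: algebra_simps mult.assoc)
  then have "I * x = I * ((1 - W) * (x * M))"
    by simp
  also have "\<dots> = x * M"
    using I by (simp add: mult.assoc[symmetric] W_def)
  finally show ?thesis
    by (simp add: M_def)
qed

lemma inverse_sandwich:
  assumes "Q * (1 - v * (t * x + y)) = 1" "(1 - v * (t * x + y)) * Q = 1"
  shows "(1 - v * y) * (Q * ((1 - v * (x + y)) * y)) = (1 - v * (x + y)) * (Q * (y * (1 - v * y)))"
proof -
  define B where "B = 1 - v * (t * x + y)"
  note C = central_commute[OF central_v, of x] central_commute[OF central_v, of y]
    central_commute[OF central_v, of Q] central_commute[OF central_v, of B]
    central_commute[OF central_v, of t] central_commute[OF central_t, of x]
    central_commute[OF central_t, of y] central_commute[OF central_t, of Q]
    central_commute[OF central_t, of B]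
  have QBw: "Q * (B * w) = w" for w
    using assms(1) by (simp add: B_def mult.assoc[symmetric])
  have BQw: "B * (Q * w) = w" for w
    using assms(2) by (simp add: B_def mult.assoc[symmetric])
  have h1: "1 - v * y = B + v * (t * x)"
    by (simp add: B_def algebra_simps)
  have h2: "1 - v * (x + y) = B - v * x + v * (t * x)"
    by (simp add: B_def algebra_simps)
  have hc: "y * B = B * y + v * (t * (x * y)) - v * (t * (y * x))"
    by (simp add: B_def algebra_simps C)
  have hcw: "Q * (y * B) = y + v * (t * (Q * (x * y))) - v * (t * (Q * (y * x)))"
    by (simp add: hc algebra_simps C QBw)
  define common where "common = B * y - v * (x * y) + v * (t * (x * y)) + v * (t * (x * y))
     - v * (v * (t * (x * (Q * (x * y))))) + v * (v * (t * (t * (x * (Q * (x * y))))))"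
  have "(1 - v * y) * (Q * ((1 - v * (x + y)) * y)) = common"
    unfolding h1 h2 common_def by (simp add: algebra_simps C QBw BQw)
  moreover have "(1 - v * (x + y)) * (Q * (y * (1 - v * y))) = common"
    unfolding h1 h2 common_def by (simp add: algebra_simps C QBw BQw hc hcw)
  ultimately show ?thesis
    by simp
qed

lemma inverse_identity:
  assumes P1: "P * (1 - v * y) = 1" and P2: "(1 - v * y) * P = 1"
    and Z1: "Z * (1 - v * (x + y)) = 1" and Z2: "(1 - v * (x + y)) * Z = 1"
    and I1: "I1 * (1 - (u * (x * P) + v * (x * P) - u * (v * (x * P * (x + y))))) = 1"
    and I2: "(1 - v * (t * (x * P))) * I2 = 1"
    and U: "(1 - u * x) * U = 1"
    and Q1: "Q * (1 - v * (t * x + y)) = 1" and Q2: "(1 - v * (t * x + y)) * Q = 1"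
  shows "I1 * (x * P) * I2 * ((x + y) - x * P) = x * U * Q * y"
proof -
  have PI2: "P * I2 = Q"
  proof -
    have "(1 - v * (t * x + y)) * P = (1 - v * y) * P - v * (t * (x * P))"
      by (simp add: algebra_simps)
    then have "(1 - v * (t * x + y)) * (P * I2) = 1"
      using I2 P2 by (simp add: mult.assoc[symmetric])
    then have "Q * ((1 - v * (t * x + y)) * (P * I2)) = Q"
      by simp
    then show ?thesis
      by (simp add: mult.assoc[symmetric] Q1)
  qed
  have zxP: "(x + y) - x * P = (1 - v * (x + y)) * (y * P)"
  proof -
    have "((x + y) * (1 - v * y) - x) * P = (x + y) * ((1 - v * y) * P) - x * P"
      by (simp add: algebra_simps)
    then have "(x + y) - x * P = ((x + y) * (1 - v * y) - x) * P"
      using P2 by simp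
    also have "(x + y) * (1 - v * y) - x = (1 - v * (x + y)) * y"
      by (simp add: algebra_simps central_commute[OF central_v, of x] central_commute[OF central_v, of y])
    finally show ?thesis
      by (simp add: mult.assoc)
  qed
  have "I1 * (x * P) * I2 * ((x + y) - x * P) = (I1 * x) * (P * I2) * ((x + y) - x * P)"
    by (simp add: mult.assoc)
  also have "\<dots> = x * U * Z * ((1 - v * y) * (Q * ((1 - v * (x + y)) * y))) * P"
    by (simp add: inverse_mult_x_eq[OF P1 U Z2 I1] PI2 zxP mult.assoc)
  also have "\<dots> = x * U * (Z * (1 - v * (x + y))) * Q * y * ((1 - v * y) * P)"
    by (simp add: inverse_sandwich[OF Q1 Q2] mult.assoc)
  also have "\<dots> = x * U * Q * y"
    by (simp add: Z1 P2)
  finally show ?thesis .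
qed

end

lemma Delta2_sigma2_identity:
  "Delta2 (sigma2 tvar (fps2_geom (fps_X * fps2_const nc_x + fps2_v * fps2_const nc_x
        - fps_X * (fps2_v * fps2_const (nc_x * (nc_const (1 - tvar) * nc_x + nc_y))))
      * (fps2_const nc_x * fps2_geom (fps2_v * fps2_const (nc_const tvar * nc_x)))))
    * Delta2 (fps2_const nc_y)
   = sigma2 tvar (fps2_const nc_x * fps2_geom (fps_X * fps2_const nc_x) * fps2_geom (fps2_v * fps2_const nc_y))
    * fps2_const nc_y"
  (is "Delta2 (sigma2 tvar (fps2_geom ?A1 * (?x * fps2_geom ?A2))) * Delta2 ?y
     = sigma2 tvar (?x * fps2_geom ?B * fps2_geom ?C) * ?y")
proof -
  interpret \<sigma>: ring_homomorphism "sigma2 tvar"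
    by (rule ring_homomorphism_sigma2)
  interpret \<Delta>: ring_homomorphism Delta2
    by (rule ring_homomorphism_Delta2)
  let ?t = "fps2_const (nc_const tvar)" and ?z = "fps2_const nc_z"
  let ?P = "fps_const (fps_geom nc_y)" and ?Z = "fps_const (fps_geom nc_z)"
  have xy: "?x + ?y = ?z"
    by (simp add: nc_z_def)
  have A2: "?A2 = fps2_v * (?t * ?x)"
    by simp
  note images = sigma2_images[of tvar] Delta2_images
  note homs = \<sigma>.add \<sigma>.diff \<sigma>.mult \<sigma>.one \<Delta>.add \<Delta>.diff \<Delta>.mult \<Delta>.one
  have order: "fps2_order_ge 1 ?A1" "fps2_order_ge 1 ?A2" "fps2_order_ge 1 ?B" "fps2_order_ge 1 ?C"
    by (intro fps2_order_ge_add fps2_order_ge_diff fps2_order_ge_X_mult fps2_order_ge_v_mult)+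
  have I1: "Delta2 (sigma2 tvar (fps2_geom ?A1))
      * (1 - (fps_X * (?x * ?P) + fps2_v * (?x * ?P) - fps_X * (fps2_v * (?x * ?P * ?z)))) = 1"
    using \<Delta>.mult_eq_1[OF \<sigma>.mult_eq_1[OF fps2_geom_inverse(2)[OF order(1)]]]
    by (simp only: homs images mult.assoc)
  have I2: "(1 - fps2_v * (?t * (?x * ?P))) * Delta2 (sigma2 tvar (fps2_geom ?A2)) = 1"
    using \<Delta>.mult_eq_1[OF \<sigma>.mult_eq_1[OF fps2_geom_inverse(1)[OF order(2)]]]
    by (simp only: A2 homs images mult.assoc)
  have U: "(1 - fps_X * ?x) * sigma2 tvar (fps2_geom ?B) = 1"
    using \<sigma>.mult_eq_1[OF fps2_geom_inverse(1)[OF order(3)]] by (simp only: homs images)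
  have Q: "sigma2 tvar (fps2_geom ?C) * (1 - fps2_v * (?t * ?x + ?y)) = 1"
    "(1 - fps2_v * (?t * ?x + ?y)) * sigma2 tvar (fps2_geom ?C) = 1"
    using \<sigma>.mult_eq_1[OF fps2_geom_inverse(2)[OF order(4)]]
      \<sigma>.mult_eq_1[OF fps2_geom_inverse(1)[OF order(4)]]
    by (simp_all only: homs images)
  have central: "central fps_X" "central fps2_v" "central ?t"
    by (simp_all add: central_fps_X central_fps_const central_nc_const)
  have "Delta2 (sigma2 tvar (fps2_geom ?A1 * (?x * fps2_geom ?A2))) * Delta2 ?y
      = Delta2 (sigma2 tvar (fps2_geom ?A1)) * (?x * ?P) * Delta2 (sigma2 tvar (fps2_geom ?A2))
        * (?z - ?x * ?P)"
    by (simp only: homs images mult.assoc)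
  also have "\<dots> = ?x * sigma2 tvar (fps2_geom ?B) * sigma2 tvar (fps2_geom ?C) * ?y"
    using inverse_identity[OF central fps2_geom_inverse_v(2,1)[of nc_y]
        fps2_geom_inverse_v(2,1)[of nc_z, folded xy] I1[folded xy] I2 U Q]
    by (simp only: xy)
  also have "\<dots> = sigma2 tvar (?x * fps2_geom ?B * fps2_geom ?C) * ?y"
    by (simp only: homs images)
  finally show ?thesis .
qed

lemma S_conj_Delta_v_identity:
  "fps_map (S_conj Delta_v) (fps2_geom (fps_X * fps2_const nc_x + fps2_v * fps2_const nc_x
        - fps_X * (fps2_v * fps2_const (nc_x * (nc_const (1 - tvar) * nc_x + nc_y))))
     * (fps2_const nc_x * (fps2_geom (fps2_v * fps2_const (nc_const tvar * nc_x)) * fps2_const nc_y)))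
   = fps2_const nc_x * fps2_geom (fps_X * fps2_const nc_x)
     * (fps2_const nc_y * fps2_geom (fps2_v * fps2_const nc_y))"
  (is "fps_map _ (?G1 * (?x * (?G2 * ?y))) = ?x * ?U * (?y * ?P)")
proof -
  have "fps_map (S_conj Delta_v) (?G1 * (?x * (?G2 * ?y)))
      = S2 (- tvar) (Delta2 (S2 tvar (?G1 * (?x * ?G2) * ?y)))"
    by (simp only: fps_map_S_conj mult.assoc)
  also have "\<dots> = S2 (- tvar) (Delta2 (sigma2 tvar (?G1 * (?x * ?G2))) * Delta2 ?y)"
    by (simp only: S2_mult_y ring_homomorphism.mult[OF ring_homomorphism_Delta2])
  also have "\<dots> = S2 (- tvar) (S2 tvar (?x * ?U * ?P * ?y))"
    by (simp only: Delta2_sigma2_identity S2_mult_y)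
  also have "\<dots> = ?x * ?U * (?y * ?P)"
  proof -
    have "?y * (1 - fps2_v * ?y) = (1 - fps2_v * ?y) * ?y"
      by (simp only: right_diff_distrib left_diff_distrib mult_1_left mult_1_right mult.assoc[symmetric]
          central_commute(1)[OF central_fps_const[OF central_fps_X], of ?y])
    then have "?y * ?P = ?P * ?y"
      by (rule commute_inverse) (simp_all only: fps2_geom_inverse fps2_order_ge_v_mult)
    then show ?thesis
      by (simp add: S2_neg_inverse mult.assoc)
  qed
  finally show ?thesis .
qed

theorem lemma3p5:
  shows "Delta
     (smul (sgeom (ssub (sadd (sterm 1 0 ncx) (sterm 0 1 ncx))
                        (sterm 1 1 (ncmult ncx (ncadd (ncsmult (1 - tvar) ncx) ncy)))))
       (smul (sterm 0 0 ncx)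
         (smul (sgeom (sterm 0 1 (ncsmult tvar ncx)))
               (sterm 0 0 ncy))))
   = smul (smul (sterm 0 0 ncx) (sgeom (sterm 1 0 ncx)))
          (smul (sterm 0 0 ncy) (sgeom (sterm 0 1 ncy)))"
  by (rule ser_to_fps2_inject)
    (simp only: ser_to_fps2_Delta ser_to_fps2_lhs ser_to_fps2_rhs S_conj_Delta_v_identity)

end
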